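(* Let $n\ge1$ and let $f\in\mathcal{C}^{3}(\mathbb{B}^{n})$ satisfy $$\mathrm{Re}\Big\{\sum_{k=1}^{n}\big[\overline{f_{z_{k}}}(\Delta f)_{z_{k}}+\overline{f_{\overline{z}_{k}}}(\Delta f)_{\overline{z}_{k}}\big]\Big\}\ge0\quad\text{in }\mathbb{B}^n.$$ Then for every $\alpha\ge2$, the function $\|D_f\|^{\alpha}$ is subharmonic in $\mathbb{B}^n$.
   Context: $\mathbb{B}^n$ is the open unit ball of $\mathbb{C}^n$ (identified with $\mathbb{R}^{2n}$ for subharmonicity), $\Delta=4\sum_k\partial^2/\partial z_k\partial\overline{z}_k$, and $\|D_f\|=\big(\sum_{k=1}^n(|f_{z_k}|^2+|f_{\overline z_k}|^2)\big)^{1/2}$. *)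

theory Defs
  imports "HOL-Analysis.Analysis"
begin

text \<open>Points of the complex n-space are vectors z :: complex^'n (index type 'n finite,
  so n = CARD('n) \<ge> 1). As a real vector space this is R^(2n) with the Euclidean norm.\<close>

text \<open>C^k on a set S (intended for open S), via iterated real Frechet derivatives:
  C^0 = continuous; C^(k+1) = differentiable at every point of S with all
  directional derivatives x \<mapsto> g' x v being C^k.\<close>
primrec Ck_on :: "nat \<Rightarrow> 'a::real_normed_vector set \<Rightarrow> ('a \<Rightarrow> 'b::real_normed_vector) \<Rightarrow> bool" where
  "Ck_on 0 S g = continuous_on S g"
| "Ck_on (Suc k) S g =
     (\<exists>g'. (\<forall>x\<in>S. (g has_derivative g' x) (at x)) \<and> (\<forall>v. Ck_on k S (\<lambda>x. g' x v)))"

definition dirderiv :: "('a::real_normed_vector \<Rightarrow> 'b::real_normed_vector) \<Rightarrow> 'a \<Rightarrow> 'a \<Rightarrow> 'b" where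
  "dirderiv g v x = frechet_derivative g (at x) v"

text \<open>Wirtinger derivatives: z_k = x_k + i y_k,
  d/dz_k = (d/dx_k - i d/dy_k)/2,  d/dzbar_k = (d/dx_k + i d/dy_k)/2.\<close>
definition wz :: "'n::finite \<Rightarrow> (complex^'n \<Rightarrow> complex) \<Rightarrow> complex^'n \<Rightarrow> complex" where
  "wz k g z = (dirderiv g (axis k 1) z - \<i> * dirderiv g (axis k \<i>) z) / 2"

definition wzbar :: "'n::finite \<Rightarrow> (complex^'n \<Rightarrow> complex) \<Rightarrow> complex^'n \<Rightarrow> complex" where
  "wzbar k g z = (dirderiv g (axis k 1) z + \<i> * dirderiv g (axis k \<i>) z) / 2"

definition laplacian :: "(complex^'n::finite \<Rightarrow> complex) \<Rightarrow> complex^'n \<Rightarrow> complex" where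
  "laplacian g z = (\<Sum>k\<in>UNIV. 4 * wz k (wzbar k g) z)"

definition normD :: "(complex^'n::finite \<Rightarrow> complex) \<Rightarrow> complex^'n \<Rightarrow> real" where
  "normD g z = sqrt (\<Sum>k\<in>UNIV. (cmod (wz k g z))\<^sup>2 + (cmod (wzbar k g z))\<^sup>2)"

definition usc_on :: "'a::topological_space set \<Rightarrow> ('a \<Rightarrow> real) \<Rightarrow> bool" where
  "usc_on S u \<longleftrightarrow> (\<forall>x\<in>S. \<forall>c. u x < c \<longrightarrow> (\<forall>\<^sub>F y in at x within S. u y < c))"

definition subharmonic_on :: "'a::euclidean_space set \<Rightarrow> ('a \<Rightarrow> real) \<Rightarrow> bool" where
  "subharmonic_on S u \<longleftrightarrow> usc_on S u \<and>
     (\<forall>a\<in>S. \<exists>r0>0. \<forall>r. 0 < r \<and> r < r0 \<longrightarrow>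
        cball a r \<subseteq> S \<and> u integrable_on cball a r \<and>
        u a \<le> integral (cball a r) u / measure lebesgue (cball a r))"

end

theory Submission
  imports Defs
begin

text \<open>Put u = ||D_f||^2. Differentiating twice and commuting third derivatives gives the
  Bochner-type identity
    Delta u = (sum over b, c of |d_b d_c f|^2) + 2 Re (sum over k of
      conj(f_z_k) (Delta f)_z_k + conj(f_zbar_k) (Delta f)_zbar_k),
  where b, c range over the real coordinate directions; so the hypothesis makes u a C^2
  function with Delta u >= 0. Such a function satisfies the sub-mean-value inequality on small
  balls: the mean of u over the ball of radius s about a is nondecreasing in s, because its
  derivative is, after an integration by parts against the weight (1 - |y|^2)/2, a mean of
  Delta u. Finally ||D_f||^alpha = u^(alpha/2) with alpha/2 >= 1, and Jensen's inequality for
  the convex function t |-> t^(alpha/2) carries the sub-mean-value inequality from u over to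
  u^(alpha/2).\<close>

section \<open>Functions of class \<open>C\<^sup>k\<close>\<close>

lemma Ck_on_SucI:
  "(\<forall>x\<in>S. (g has_derivative g' x) (at x)) \<Longrightarrow> (\<forall>v. Ck_on k S (\<lambda>x. g' x v)) \<Longrightarrow> Ck_on (Suc k) S g"
  by auto

lemma Ck_on_SucE:
  assumes "Ck_on (Suc k) S g"
  obtains g' where "\<forall>x\<in>S. (g has_derivative g' x) (at x)" "\<forall>v. Ck_on k S (\<lambda>x. g' x v)"
  using assms by auto

declare Ck_on.simps(2) [simp del]

lemma dirderiv_at: "(g has_derivative D) (at x) \<Longrightarrow> dirderiv g v x = D v"
  unfolding dirderiv_def by (metis frechet_derivative_at)

lemma dirderiv_cong:
  assumes "open S" "x \<in> S" "\<And>y. y \<in> S \<Longrightarrow> g y = h y"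
  shows "dirderiv g v x = dirderiv h v x"
proof -
  have "(g has_derivative D) (at x) = (h has_derivative D) (at x)" for D
    using has_derivative_transform_within_open[of g D x UNIV S h]
      has_derivative_transform_within_open[of h D x UNIV S g] assms by auto
  then show ?thesis unfolding dirderiv_def frechet_derivative_def by simp
qed

lemma Ck_on_cong:
  "open S \<Longrightarrow> (\<And>x. x \<in> S \<Longrightarrow> g x = h x) \<Longrightarrow> Ck_on k S g \<Longrightarrow> Ck_on k S h"
proof (induction k arbitrary: g h)
  case 0
  then show ?case by (metis Ck_on.simps(1) continuous_on_cong)
next
  case (Suc k)
  from Suc.prems(3) obtain g' where g': "\<forall>x\<in>S. (g has_derivative g' x) (at x)"
    "\<forall>v. Ck_on k S (\<lambda>x. g' x v)" by (rule Ck_on_SucE)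
  have "\<forall>x\<in>S. (h has_derivative g' x) (at x)"
    using g'(1) has_derivative_transform_within_open[of g _ _ UNIV S h] Suc.prems by blast
  with g'(2) show ?case by (blast intro: Ck_on_SucI)
qed

lemma Ck_on_Suc_has_derivative:
  assumes "Ck_on (Suc k) S g" "x \<in> S"
  shows "(g has_derivative (\<lambda>v. dirderiv g v x)) (at x)"
proof -
  obtain g' where "\<forall>x\<in>S. (g has_derivative g' x) (at x)"
    using Ck_on_SucE[OF assms(1)] by blast
  then have "(g has_derivative g' x) (at x)" using assms by auto
  moreover from this have "(\<lambda>v. dirderiv g v x) = g' x" using dirderiv_at by blast
  ultimately show ?thesis by simp
qed

lemma Ck_on_Suc_differentiable: "Ck_on (Suc k) S g \<Longrightarrow> x \<in> S \<Longrightarrow> g differentiable (at x)"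
  using Ck_on_Suc_has_derivative differentiable_def by blast

lemma Ck_on_dirderiv:
  assumes "open S" "Ck_on (Suc k) S g"
  shows "Ck_on k S (dirderiv g v)"
proof -
  obtain g' where g': "\<forall>x\<in>S. (g has_derivative g' x) (at x)" "\<forall>v. Ck_on k S (\<lambda>x. g' x v)"
    using Ck_on_SucE[OF assms(2)] by blast
  show ?thesis
    by (rule Ck_on_cong[OF assms(1) _ g'(2)[rule_format, of v]]) (use g'(1) dirderiv_at in metis)
qed

lemma Ck_on_Suc_imp_Ck_on: "Ck_on (Suc k) S g \<Longrightarrow> Ck_on k S g"
proof (induction k arbitrary: g)
  case 0
  then obtain g' where "\<forall>x\<in>S. (g has_derivative g' x) (at x)" by (rule Ck_on_SucE)
  then have "continuous_on S g"
    by (meson continuous_at_imp_continuous_on has_derivative_continuous)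
  then show ?case by simp
next
  case (Suc k)
  from Suc.prems obtain g' where "\<forall>x\<in>S. (g has_derivative g' x) (at x)"
    "\<forall>v. Ck_on (Suc k) S (\<lambda>x. g' x v)" by (rule Ck_on_SucE)
  then show ?case using Suc.IH by (intro Ck_on_SucI) auto
qed

lemma Ck_on_imp_continuous_on: "Ck_on k S g \<Longrightarrow> continuous_on S g"
  by (induction k arbitrary: g) (auto dest: Ck_on_Suc_imp_Ck_on)

lemma Ck_on_const: "Ck_on k S (\<lambda>x. c)"
proof (induction k arbitrary: c)
  case (Suc k)
  then show ?case by (intro Ck_on_SucI[where g'="\<lambda>x v. 0"]) auto
qed simp

lemma Ck_on_add: "Ck_on k S g \<Longrightarrow> Ck_on k S h \<Longrightarrow> Ck_on k S (\<lambda>x. g x + h x)"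
proof (induction k arbitrary: g h)
  case 0
  then show ?case by (auto intro: continuous_on_add)
next
  case (Suc k)
  from Suc.prems obtain g' h' where g': "\<forall>x\<in>S. (g has_derivative g' x) (at x)"
    "\<forall>v. Ck_on k S (\<lambda>x. g' x v)" and h': "\<forall>x\<in>S. (h has_derivative h' x) (at x)"
    "\<forall>v. Ck_on k S (\<lambda>x. h' x v)" by (metis Ck_on_SucE)
  have "\<forall>x\<in>S. ((\<lambda>x. g x + h x) has_derivative (\<lambda>v. g' x v + h' x v)) (at x)"
    using g' h' by (auto intro: has_derivative_add)
  moreover have "\<forall>v. Ck_on k S (\<lambda>x. g' x v + h' x v)" using Suc.IH g' h' by auto
  ultimately show ?case by (rule Ck_on_SucI)
qed

lemma Ck_on_bounded_linear:
  assumes "bounded_linear L"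
  shows "Ck_on k S g \<Longrightarrow> Ck_on k S (\<lambda>x. L (g x))"
proof (induction k arbitrary: g)
  case 0
  then show ?case using assms by (auto intro: continuous_on_compose2[OF linear_continuous_on])
next
  case (Suc k)
  from Suc.prems obtain g' where g': "\<forall>x\<in>S. (g has_derivative g' x) (at x)"
    "\<forall>v. Ck_on k S (\<lambda>x. g' x v)" by (rule Ck_on_SucE)
  have "\<forall>x\<in>S. ((\<lambda>x. L (g x)) has_derivative (\<lambda>v. L (g' x v))) (at x)"
    using g' bounded_linear.has_derivative[OF assms] by blast
  moreover have "\<forall>v. Ck_on k S (\<lambda>x. L (g' x v))" using Suc.IH g' by auto
  ultimately show ?case by (rule Ck_on_SucI)
qed

lemma Ck_on_mult:
  fixes g h :: "'a::real_normed_vector \<Rightarrow> 'b::real_normed_algebra"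
  shows "Ck_on k S g \<Longrightarrow> Ck_on k S h \<Longrightarrow> Ck_on k S (\<lambda>x. g x * h x)"
proof (induction k arbitrary: g h)
  case 0
  then show ?case by (auto intro: continuous_on_mult)
next
  case (Suc k)
  from Suc.prems obtain g' h' where g': "\<forall>x\<in>S. (g has_derivative g' x) (at x)"
    "\<forall>v. Ck_on k S (\<lambda>x. g' x v)" and h': "\<forall>x\<in>S. (h has_derivative h' x) (at x)"
    "\<forall>v. Ck_on k S (\<lambda>x. h' x v)" by (metis Ck_on_SucE)
  have "\<forall>x\<in>S. ((\<lambda>x. g x * h x) has_derivative (\<lambda>v. g x * h' x v + g' x v * h x)) (at x)"
    using g' h' by (auto intro: has_derivative_mult)
  moreover have "\<forall>v. Ck_on k S (\<lambda>x. g x * h' x v + g' x v * h x)"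
    using Suc.IH g' h' Suc.prems[THEN Ck_on_Suc_imp_Ck_on] Ck_on_add by blast
  ultimately show ?case by (rule Ck_on_SucI)
qed

lemma Ck_on_sum:
  "finite I \<Longrightarrow> (\<And>i. i \<in> I \<Longrightarrow> Ck_on k S (g i)) \<Longrightarrow> Ck_on k S (\<lambda>x. \<Sum>i\<in>I. g i x)"
  by (induction I rule: finite_induct) (auto intro: Ck_on_add Ck_on_const)

lemma Ck_on_2_dirderiv_differentiable:
  assumes "open S" "Ck_on 2 S g" "x \<in> S"
  shows "dirderiv g v differentiable (at x)"
proof -
  have "Ck_on (Suc 0) S (dirderiv g v)"
    using Ck_on_dirderiv[OF assms(1), of "Suc 0"] assms(2) by (simp add: numeral_2_eq_2)
  then show ?thesis using Ck_on_Suc_differentiable assms(3) by blast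
qed

lemma Ck_on_2_differentiable: "Ck_on 2 S g \<Longrightarrow> x \<in> S \<Longrightarrow> g differentiable (at x)"
  by (rule Ck_on_Suc_differentiable[of 1]) (simp_all add: numeral_2_eq_2)

lemma dirderiv_bounded_linear:
  assumes "bounded_linear L" "g differentiable (at x)"
  shows "dirderiv (\<lambda>y. L (g y)) v x = L (dirderiv g v x)"
proof -
  have "(g has_derivative frechet_derivative g (at x)) (at x)"
    using assms(2) frechet_derivative_works by blast
  from bounded_linear.has_derivative[OF assms(1) this] show ?thesis
    using dirderiv_at by (simp add: dirderiv_def)
qed

lemma dirderiv_sum:
  assumes "finite I" "\<And>i. i \<in> I \<Longrightarrow> h i differentiable (at x)"
  shows "dirderiv (\<lambda>y. \<Sum>i\<in>I. h i y) v x = (\<Sum>i\<in>I. dirderiv (h i) v x)"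
proof -
  have "((\<lambda>y. \<Sum>i\<in>I. h i y) has_derivative (\<lambda>v. \<Sum>i\<in>I. frechet_derivative (h i) (at x) v)) (at x)"
    using assms by (intro has_derivative_sum) (auto simp: frechet_derivative_works)
  then show ?thesis using dirderiv_at by (simp add: dirderiv_def)
qed

lemma dirderiv_mult:
  fixes g h :: "'a::real_normed_vector \<Rightarrow> 'b::real_normed_algebra"
  assumes "g differentiable (at x)" "h differentiable (at x)"
  shows "dirderiv (\<lambda>y. g y * h y) v x = g x * dirderiv h v x + dirderiv g v x * h x"
proof -
  have "((\<lambda>y. g y * h y) has_derivative
      (\<lambda>v. g x * frechet_derivative h (at x) v + frechet_derivative g (at x) v * h x)) (at x)"
    using assms by (intro has_derivative_mult) (auto simp: frechet_derivative_works)
  then show ?thesis using dirderiv_at by (simp add: dirderiv_def)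
qed

lemma dirderiv_euclidean_expansion:
  fixes g :: "'a::euclidean_space \<Rightarrow> 'b::real_normed_vector"
  assumes "(g has_derivative D) (at z)"
  shows "dirderiv g v z = (\<Sum>b\<in>Basis. (v \<bullet> b) *\<^sub>R dirderiv g b z)"
proof -
  have l: "linear D" using has_derivative_linear[OF assms] .
  have "dirderiv g v z = D (\<Sum>b\<in>Basis. (v \<bullet> b) *\<^sub>R b)"
    by (simp add: dirderiv_at[OF assms] euclidean_representation)
  also have "\<dots> = (\<Sum>b\<in>Basis. (v \<bullet> b) *\<^sub>R D b)"
    by (simp add: linear_sum[OF l] linear_cmul[OF l])
  finally show ?thesis by (simp add: dirderiv_at[OF assms])
qed

lemma has_real_derivative_along_line:
  fixes g :: "'a::real_normed_vector \<Rightarrow> real"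
  assumes "(g has_derivative D) (at (x + s *\<^sub>R v))"
  shows "((\<lambda>s. g (x + s *\<^sub>R v)) has_real_derivative D v) (at s)"
proof -
  have "((\<lambda>s. x + s *\<^sub>R v) has_derivative (\<lambda>h. h *\<^sub>R v)) (at s)"
    by (auto intro!: derivative_eq_intros)
  from has_derivative_compose[OF this assms]
  have "((\<lambda>s. g (x + s *\<^sub>R v)) has_derivative (\<lambda>h. D (h *\<^sub>R v))) (at s)" .
  moreover have "(\<lambda>h. D (h *\<^sub>R v)) = (\<lambda>h. D v * h)"
    using linear_cmul[OF has_derivative_linear[OF assms]] by auto
  ultimately show ?thesis by (simp add: has_field_derivative_def)
qed

lemma dirderiv2_bounded_linear:
  assumes "open S" "Ck_on 2 S g" "x \<in> S" "bounded_linear L"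
  shows "dirderiv (dirderiv (\<lambda>y. L (g y)) v) w x = L (dirderiv (dirderiv g v) w x)"
proof -
  have "dirderiv (dirderiv (\<lambda>y. L (g y)) v) w x = dirderiv (\<lambda>y. L (dirderiv g v y)) w x"
    using assms by (intro dirderiv_cong dirderiv_bounded_linear Ck_on_2_differentiable)
  also have "\<dots> = L (dirderiv (dirderiv g v) w x)"
    using assms by (intro dirderiv_bounded_linear Ck_on_2_dirderiv_differentiable)
  finally show ?thesis .
qed

lemma dirderiv2_sum:
  assumes "open S" "finite I" "\<And>i. i \<in> I \<Longrightarrow> Ck_on 2 S (h i)" "x \<in> S"
  shows "dirderiv (dirderiv (\<lambda>y. \<Sum>i\<in>I. h i y) v) w x = (\<Sum>i\<in>I. dirderiv (dirderiv (h i) v) w x)"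
proof -
  have "dirderiv (dirderiv (\<lambda>y. \<Sum>i\<in>I. h i y) v) w x = dirderiv (\<lambda>y. \<Sum>i\<in>I. dirderiv (h i) v y) w x"
    using assms by (intro dirderiv_cong dirderiv_sum Ck_on_2_differentiable) auto
  also have "\<dots> = (\<Sum>i\<in>I. dirderiv (dirderiv (h i) v) w x)"
    using assms by (intro dirderiv_sum Ck_on_2_dirderiv_differentiable) auto
  finally show ?thesis .
qed

lemma dirderiv2_add:
  assumes "open S" "Ck_on 2 S g" "Ck_on 2 S h" "x \<in> S"
  shows "dirderiv (dirderiv (\<lambda>y. g y + h y) v) w x
    = dirderiv (dirderiv g v) w x + dirderiv (dirderiv h v) w x"
  using dirderiv2_sum[OF assms(1), of "{True, False}" "\<lambda>i. if i then g else h"] assms by simp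

lemma dirderiv2_power2:
  fixes g :: "'a::real_normed_vector \<Rightarrow> real"
  assumes "open S" "Ck_on 2 S g" "x \<in> S"
  shows "dirderiv (dirderiv (\<lambda>y. (g y)\<^sup>2) c) c x
    = 2 * (dirderiv g c x)\<^sup>2 + 2 * (g x * dirderiv (dirderiv g c) c x)"
proof -
  have dg: "g differentiable (at x)" "dirderiv g c differentiable (at x)"
    using assms by (auto intro: Ck_on_2_differentiable Ck_on_2_dirderiv_differentiable)
  have "dirderiv (dirderiv (\<lambda>y. (g y)\<^sup>2) c) c x = dirderiv (\<lambda>y. 2 * (g y * dirderiv g c y)) c x"
  proof (rule dirderiv_cong[OF assms(1,3)])
    fix y assume "y \<in> S"
    with assms(2) have "g differentiable (at y)" by (rule Ck_on_2_differentiable)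
    then show "dirderiv (\<lambda>y. (g y)\<^sup>2) c y = 2 * (g y * dirderiv g c y)"
      using dirderiv_mult[of g y g c] by (simp add: power2_eq_square algebra_simps)
  qed
  also have "\<dots> = 2 * dirderiv (\<lambda>y. g y * dirderiv g c y) c x"
    using dirderiv_bounded_linear[OF bounded_linear_mult_right differentiable_mult[OF dg]] .
  also have "\<dots> = 2 * (g x * dirderiv (dirderiv g c) c x + dirderiv g c x * dirderiv g c x)"
    using dirderiv_mult[OF dg] by simp
  finally show ?thesis by (simp add: power2_eq_square algebra_simps)
qed

section \<open>Symmetry of second derivatives\<close>

lemma mean_value_along_line:
  fixes g :: "'a::real_normed_vector \<Rightarrow> real"
  assumes t: "0 < t" and d: "\<And>s. 0 \<le> s \<Longrightarrow> s \<le> t \<Longrightarrow> (g has_derivative D s) (at (x + s *\<^sub>R v))"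
  obtains s where "0 < s" "s < t" "g (x + t *\<^sub>R v) - g x = t * D s v"
proof -
  have "((\<lambda>s. g (x + s *\<^sub>R v)) has_real_derivative D s v) (at s)" if "0 \<le> s" "s \<le> t" for s
    using has_real_derivative_along_line[OF d[OF that]] .
  from MVT2[OF t this] that show ?thesis by auto
qed

lemma second_difference_mean_value:
  fixes g :: "'a::real_normed_vector \<Rightarrow> real"
  assumes S: "open S" "Ck_on 2 S g" "ball x \<delta> \<subseteq> S"
    and t: "t > 0" "t * (norm v + norm w) < \<delta>"
  obtains \<xi> where "dist \<xi> x < \<delta>"
    "g (x + t *\<^sub>R v + t *\<^sub>R w) - g (x + t *\<^sub>R v) - g (x + t *\<^sub>R w) + g x
      = t\<^sup>2 * dirderiv (dirderiv g v) w \<xi>"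
proof -
  have g2: "Ck_on (Suc (Suc 0)) S g" using S(2) by (simp add: numeral_2_eq_2)
  have near: "dist (x + a *\<^sub>R v + b *\<^sub>R w) x < \<delta>" if "0 \<le> a" "a \<le> t" "0 \<le> b" "b \<le> t" for a b
  proof -
    have "norm (a *\<^sub>R v + b *\<^sub>R w) \<le> a * norm v + b * norm w"
      using that by (smt (verit) norm_scaleR norm_triangle_ineq)
    also have "\<dots> \<le> t * (norm v + norm w)"
      using that by (simp add: add_mono distrib_left mult_right_mono)
    finally show ?thesis using t by (simp add: dist_norm)
  qed
  then have inS: "x + a *\<^sub>R v + b *\<^sub>R w \<in> S" if "0 \<le> a" "a \<le> t" "0 \<le> b" "b \<le> t" for a b
    using that S(3) by (auto simp: dist_commute)
  have dG: "((\<lambda>y. g (y + t *\<^sub>R w) - g y) has_derivative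
      (\<lambda>h. dirderiv g h (x + s *\<^sub>R v + t *\<^sub>R w) - dirderiv g h (x + s *\<^sub>R v))) (at (x + s *\<^sub>R v))"
    if "0 \<le> s" "s \<le> t" for s
  proof -
    have "((\<lambda>y. y + t *\<^sub>R w) has_derivative (\<lambda>h. h)) (at (x + s *\<^sub>R v))"
      by (auto intro!: derivative_eq_intros)
    from has_derivative_compose[OF this Ck_on_Suc_has_derivative[OF g2 inS[OF that, of t]]]
      Ck_on_Suc_has_derivative[OF g2] inS[OF that, of 0] t
    show ?thesis by (auto intro: has_derivative_diff)
  qed
  obtain s1 where s1: "0 < s1" "s1 < t"
    "g (x + t *\<^sub>R v + t *\<^sub>R w) - g (x + t *\<^sub>R v) - (g (x + t *\<^sub>R w) - g x)
      = t * (dirderiv g v (x + s1 *\<^sub>R v + t *\<^sub>R w) - dirderiv g v (x + s1 *\<^sub>R v))"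
    using mean_value_along_line[OF t(1) dG] by blast
  have dD: "(dirderiv g v has_derivative (\<lambda>h. dirderiv (dirderiv g v) h (x + s1 *\<^sub>R v + \<sigma> *\<^sub>R w)))
      (at (x + s1 *\<^sub>R v + \<sigma> *\<^sub>R w))" if "0 \<le> \<sigma>" "\<sigma> \<le> t" for \<sigma>
    using inS[of s1 \<sigma>] s1 that by (intro Ck_on_Suc_has_derivative[OF Ck_on_dirderiv[OF S(1) g2]]) auto
  obtain \<sigma>1 where \<sigma>1: "0 < \<sigma>1" "\<sigma>1 < t"
    "dirderiv g v (x + s1 *\<^sub>R v + t *\<^sub>R w) - dirderiv g v (x + s1 *\<^sub>R v)
      = t * dirderiv (dirderiv g v) w (x + s1 *\<^sub>R v + \<sigma>1 *\<^sub>R w)"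
    using mean_value_along_line[OF t(1) dD] by blast
  show ?thesis
  proof
    show "dist (x + s1 *\<^sub>R v + \<sigma>1 *\<^sub>R w) x < \<delta>" using near s1 \<sigma>1 by simp
    show "g (x + t *\<^sub>R v + t *\<^sub>R w) - g (x + t *\<^sub>R v) - g (x + t *\<^sub>R w) + g x
      = t\<^sup>2 * dirderiv (dirderiv g v) w (x + s1 *\<^sub>R v + \<sigma>1 *\<^sub>R w)"
      using s1(3) \<sigma>1(3) by (simp add: power2_eq_square algebra_simps)
  qed
qed

text \<open>Both mixed derivatives are limits of the same symmetric second difference quotient.\<close>

lemma dirderiv2_commute_real:
  fixes g :: "'a::real_normed_vector \<Rightarrow> real"
  assumes S: "open S" "Ck_on 2 S g" "x \<in> S"
  shows "dirderiv (dirderiv g v) w x = dirderiv (dirderiv g w) v x"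
proof -
  let ?A = "dirderiv (dirderiv g v) w x" and ?B = "dirderiv (dirderiv g w) v x"
  have cont: "continuous (at x) (dirderiv (dirderiv g a) b)" for a b
  proof -
    have "Ck_on 0 S (dirderiv (dirderiv g a) b)"
      using S(2) by (intro Ck_on_dirderiv[OF S(1)]) (simp add: numeral_2_eq_2)
    then show ?thesis
      using S Ck_on_imp_continuous_on continuous_on_eq_continuous_at by blast
  qed
  have "\<bar>?A - ?B\<bar> < 2 * e" if e: "e > 0" for e
  proof -
    obtain d0 where d0: "d0 > 0" "ball x d0 \<subseteq> S" using S open_contains_ball by blast
    obtain d1 where d1: "d1 > 0" "\<And>y. dist y x < d1 \<Longrightarrow> dist (dirderiv (dirderiv g v) w y) ?A < e"
      using e cont unfolding continuous_at_eps_delta by blast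
    obtain d2 where d2: "d2 > 0" "\<And>y. dist y x < d2 \<Longrightarrow> dist (dirderiv (dirderiv g w) v y) ?B < e"
      using e cont unfolding continuous_at_eps_delta by blast
    define \<delta> where "\<delta> = min d0 (min d1 d2)"
    have \<delta>: "\<delta> > 0" "ball x \<delta> \<subseteq> S" using d0 d1 d2 by (auto simp: \<delta>_def)
    define t where "t = (\<delta> / 2) / (norm v + norm w + 1)"
    have p: "norm v + norm w + 1 > 0" by (smt (verit) norm_ge_zero)
    have t0: "t > 0" using \<delta> p by (simp add: t_def)
    have "t * (norm v + norm w) \<le> t * (norm v + norm w + 1)" using t0 by simp
    also have "\<dots> = \<delta> / 2" using p unfolding t_def by (simp add: divide_simps)
    finally have t: "t > 0" "t * (norm v + norm w) < \<delta>" "t * (norm w + norm v) < \<delta>"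
      using t0 \<delta> by (simp_all add: add.commute)
    obtain \<xi> where \<xi>: "dist \<xi> x < \<delta>" "g (x + t *\<^sub>R v + t *\<^sub>R w) - g (x + t *\<^sub>R v) - g (x + t *\<^sub>R w) + g x
      = t\<^sup>2 * dirderiv (dirderiv g v) w \<xi>"
      using second_difference_mean_value[OF S(1,2) \<delta>(2) t(1,2)] by blast
    obtain \<eta> where \<eta>: "dist \<eta> x < \<delta>" "g (x + t *\<^sub>R w + t *\<^sub>R v) - g (x + t *\<^sub>R w) - g (x + t *\<^sub>R v) + g x
      = t\<^sup>2 * dirderiv (dirderiv g w) v \<eta>"
      using second_difference_mean_value[OF S(1,2) \<delta>(2) t(1,3)] by blast
    have "dirderiv (dirderiv g v) w \<xi> = dirderiv (dirderiv g w) v \<eta>"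
      using \<xi>(2) \<eta>(2) t(1) by (simp add: algebra_simps)
    moreover have "dist (dirderiv (dirderiv g v) w \<xi>) ?A < e" using d1 \<xi>(1) by (auto simp: \<delta>_def)
    moreover have "dist (dirderiv (dirderiv g w) v \<eta>) ?B < e" using d2 \<eta>(1) by (auto simp: \<delta>_def)
    ultimately show ?thesis by (simp add: dist_real_def)
  qed
  from this[of "\<bar>?A - ?B\<bar> / 2"] show ?thesis by force
qed

lemma dirderiv2_commute:
  fixes g :: "'a::real_normed_vector \<Rightarrow> complex"
  assumes "open S" "Ck_on 2 S g" "x \<in> S"
  shows "dirderiv (dirderiv g v) w x = dirderiv (dirderiv g w) v x"
proof (rule complex_eqI)
  have "Ck_on 2 S (\<lambda>y. Re (g y))" "Ck_on 2 S (\<lambda>y. Im (g y))"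
    using assms(2) by (auto intro: Ck_on_bounded_linear bounded_linear_Re bounded_linear_Im)
  then show "Re (dirderiv (dirderiv g v) w x) = Re (dirderiv (dirderiv g w) v x)"
    "Im (dirderiv (dirderiv g v) w x) = Im (dirderiv (dirderiv g w) v x)"
    using dirderiv2_commute_real[OF assms(1) _ assms(3)]
      dirderiv2_bounded_linear[OF assms bounded_linear_Re]
      dirderiv2_bounded_linear[OF assms bounded_linear_Im] by metis+
qed

lemma dirderiv3_commute:
  fixes f :: "'a::real_normed_vector \<Rightarrow> complex"
  assumes S: "open S" and f3: "Ck_on 3 S f" and x: "x \<in> S"
  shows "dirderiv (dirderiv (dirderiv f b) c) c x = dirderiv (dirderiv (dirderiv f c) c) b x"
proof -
  have f3': "Ck_on (Suc 2) S f" using f3 by simp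
  have "dirderiv (dirderiv (dirderiv f b) c) c x = dirderiv (dirderiv (dirderiv f c) b) c x"
    using dirderiv_cong[OF S x] dirderiv2_commute[OF S Ck_on_Suc_imp_Ck_on[OF f3']] by blast
  also have "\<dots> = dirderiv (dirderiv (dirderiv f c) c) b x"
    using dirderiv2_commute[OF S Ck_on_dirderiv[OF S f3'] x] .
  finally show ?thesis .
qed

section \<open>The Laplacian of the squared gradient\<close>

definition real_laplacian :: "('a::euclidean_space \<Rightarrow> 'b::real_normed_vector) \<Rightarrow> 'a \<Rightarrow> 'b" where
  "real_laplacian g x = (\<Sum>c\<in>Basis. dirderiv (dirderiv g c) c x)"

lemma real_laplacian_bounded_linear:
  assumes "open S" "Ck_on 2 S g" "x \<in> S" "bounded_linear L"
  shows "real_laplacian (\<lambda>y. L (g y)) x = L (real_laplacian g x)"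
  unfolding real_laplacian_def dirderiv2_bounded_linear[OF assms]
  by (simp add: linear_sum[OF bounded_linear.linear[OF assms(4)]])

lemma Ck_on_cmod_power2:
  fixes g :: "'a::real_normed_vector \<Rightarrow> complex"
  assumes "Ck_on k S g"
  shows "Ck_on k S (\<lambda>z. (cmod (g z))\<^sup>2)"
proof -
  have "Ck_on k S (\<lambda>z. Re (g z))" "Ck_on k S (\<lambda>z. Im (g z))"
    using assms by (auto intro: Ck_on_bounded_linear bounded_linear_Re bounded_linear_Im)
  then have "Ck_on k S (\<lambda>z. Re (g z) * Re (g z) + Im (g z) * Im (g z))"
    by (intro Ck_on_add Ck_on_mult)
  then show ?thesis unfolding cmod_power2 by (simp add: power2_eq_square)
qed

lemma dirderiv2_cmod_power2:
  fixes g :: "'a::real_normed_vector \<Rightarrow> complex"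
  assumes S: "open S" "Ck_on 2 S g" "x \<in> S"
  shows "dirderiv (dirderiv (\<lambda>z. (cmod (g z))\<^sup>2) c) c x
    = 2 * (cmod (dirderiv g c x))\<^sup>2 + 2 * Re (cnj (g x) * dirderiv (dirderiv g c) c x)"
proof -
  have re_im: "Ck_on 2 S (\<lambda>z. Re (g z))" "Ck_on 2 S (\<lambda>z. Im (g z))"
    using S(2) by (auto intro: Ck_on_bounded_linear bounded_linear_Re bounded_linear_Im)
  have sq: "Ck_on 2 S (\<lambda>z. (h z)\<^sup>2)" if "Ck_on 2 S h" for h :: "'a \<Rightarrow> real"
    using Ck_on_mult[OF that that] by (simp add: power2_eq_square)
  have d1: "dirderiv (\<lambda>z. Re (g z)) c x = Re (dirderiv g c x)"
    "dirderiv (\<lambda>z. Im (g z)) c x = Im (dirderiv g c x)"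
    using S by (auto intro: dirderiv_bounded_linear bounded_linear_Re bounded_linear_Im
        Ck_on_2_differentiable)
  have d2: "dirderiv (dirderiv (\<lambda>z. Re (g z)) c) c x = Re (dirderiv (dirderiv g c) c x)"
    "dirderiv (dirderiv (\<lambda>z. Im (g z)) c) c x = Im (dirderiv (dirderiv g c) c x)"
    using dirderiv2_bounded_linear[OF S bounded_linear_Re]
      dirderiv2_bounded_linear[OF S bounded_linear_Im] by auto
  have "dirderiv (dirderiv (\<lambda>z. (cmod (g z))\<^sup>2) c) c x
      = dirderiv (dirderiv (\<lambda>z. (Re (g z))\<^sup>2 + (Im (g z))\<^sup>2) c) c x"
    unfolding cmod_power2 ..
  also have "\<dots> = dirderiv (dirderiv (\<lambda>z. (Re (g z))\<^sup>2) c) c x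
      + dirderiv (dirderiv (\<lambda>z. (Im (g z))\<^sup>2) c) c x"
    by (rule dirderiv2_add[OF S(1) sq[OF re_im(1)] sq[OF re_im(2)] S(3)])
  also have "\<dots> = 2 * (cmod (dirderiv g c x))\<^sup>2 + 2 * Re (cnj (g x) * dirderiv (dirderiv g c) c x)"
    unfolding dirderiv2_power2[OF S(1) re_im(1) S(3)] dirderiv2_power2[OF S(1) re_im(2) S(3)] d1 d2
    by (simp add: cmod_power2 algebra_simps)
  finally show ?thesis .
qed

text \<open>By Schwarz's theorem the third derivatives combine into the gradient of the Laplacian.\<close>

lemma real_laplacian_sum_cmod_dirderiv_power2:
  fixes f :: "'a::euclidean_space \<Rightarrow> complex"
  assumes S: "open S" and f3: "Ck_on 3 S f" and x: "x \<in> S"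
  shows "real_laplacian (\<lambda>z. \<Sum>b\<in>Basis. (cmod (dirderiv f b z))\<^sup>2) x
    = 2 * (\<Sum>b\<in>Basis. \<Sum>c\<in>Basis. (cmod (dirderiv (dirderiv f b) c x))\<^sup>2)
      + 2 * (\<Sum>b\<in>Basis. Re (cnj (dirderiv f b x) * dirderiv (real_laplacian f) b x))"
proof -
  have f3': "Ck_on (Suc 2) S f" using f3 by simp
  have df2: "Ck_on 2 S (dirderiv f b)" for b using Ck_on_dirderiv[OF S f3'] .
  have grad_lap: "dirderiv (real_laplacian f) b x = (\<Sum>c\<in>Basis. dirderiv (dirderiv (dirderiv f b) c) c x)"
    for b
  proof -
    have "dirderiv (real_laplacian f) b x = (\<Sum>c\<in>Basis. dirderiv (dirderiv (dirderiv f c) c) b x)"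
      unfolding real_laplacian_def[abs_def]
      by (rule dirderiv_sum) (auto intro: Ck_on_2_dirderiv_differentiable[OF S df2 x])
    then show ?thesis using dirderiv3_commute[OF S f3 x] by simp
  qed
  have "real_laplacian (\<lambda>z. \<Sum>b\<in>Basis. (cmod (dirderiv f b z))\<^sup>2) x
    = (\<Sum>c\<in>Basis. \<Sum>b\<in>Basis. dirderiv (dirderiv (\<lambda>z. (cmod (dirderiv f b z))\<^sup>2) c) c x)"
    unfolding real_laplacian_def
    by (rule sum.cong[OF refl], rule dirderiv2_sum) (use S df2 x Ck_on_cmod_power2 in auto)
  also have "\<dots> = (\<Sum>c\<in>Basis. \<Sum>b\<in>Basis. 2 * (cmod (dirderiv (dirderiv f b) c x))\<^sup>2
      + 2 * Re (cnj (dirderiv f b x) * dirderiv (dirderiv (dirderiv f b) c) c x))"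
    by (simp add: dirderiv2_cmod_power2[OF S df2 x])
  also have "\<dots> = 2 * (\<Sum>b\<in>Basis. \<Sum>c\<in>Basis. (cmod (dirderiv (dirderiv f b) c x))\<^sup>2)
      + 2 * (\<Sum>b\<in>Basis. Re (cnj (dirderiv f b x) * (\<Sum>c\<in>Basis. dirderiv (dirderiv (dirderiv f b) c) c x)))"
    by (subst sum.swap) (simp add: sum.distrib sum_distrib_left Re_sum)
  finally show ?thesis by (simp add: grad_lap)
qed

section \<open>Wirtinger derivatives\<close>

lemma sum_Basis_vec_complex:
  "(\<Sum>b\<in>(Basis::(complex^'n::finite) set). F b) = (\<Sum>k\<in>UNIV. F (axis k 1) + F (axis k \<i>))"
proof -
  have B: "(Basis::(complex^'n) set) = (\<lambda>(k,u). axis k u) ` (UNIV \<times> {1, \<i>})"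
    by (auto simp: Basis_vec_def Basis_complex_def)
  have inj: "inj_on (\<lambda>(k,u). axis k u :: complex^'n) (UNIV \<times> {1, \<i>})"
    by (auto simp: inj_on_def axis_eq_axis)
  have "(\<Sum>b\<in>(Basis::(complex^'n) set). F b) = (\<Sum>(k,u)\<in>UNIV \<times> {1, \<i>}. F (axis k u))"
    unfolding B sum.reindex[OF inj] by (rule sum.cong) auto
  also have "\<dots> = (\<Sum>k\<in>UNIV. \<Sum>u\<in>{1, \<i>}. F (axis k u))"
    by (rule sum.cartesian_product[symmetric])
  also have "\<dots> = (\<Sum>k\<in>UNIV. F (axis k 1) + F (axis k \<i>))"
    by (simp add: complex_eq_iff)
  finally show ?thesis .
qed

lemma cmod_wirtinger_power2:
  "(cmod ((a - \<i> * b) / 2))\<^sup>2 + (cmod ((a + \<i> * b) / 2))\<^sup>2 = ((cmod a)\<^sup>2 + (cmod b)\<^sup>2) / 2"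
  unfolding cmod_power2 by (simp add: power2_eq_square field_simps)

lemma cnj_wirtinger_mult:
  "cnj ((a - \<i> * b) / 2) * ((A - \<i> * B) / 2) + cnj ((a + \<i> * b) / 2) * ((A + \<i> * B) / 2)
    = (cnj a * A + cnj b * B) / 2"
  by (simp add: complex_eq_iff field_simps)

lemma normD_power2:
  "(normD f z)\<^sup>2 = (\<Sum>b\<in>Basis. (cmod (dirderiv f b z))\<^sup>2) / 2"
proof -
  have "(normD f z)\<^sup>2 = (\<Sum>k\<in>UNIV. (cmod (wz k f z))\<^sup>2 + (cmod (wzbar k f z))\<^sup>2)"
    unfolding normD_def by (rule real_sqrt_pow2) (auto intro: sum_nonneg)
  also have "\<dots> = (\<Sum>k\<in>UNIV. ((cmod (dirderiv f (axis k 1) z))\<^sup>2 + (cmod (dirderiv f (axis k \<i>) z))\<^sup>2) / 2)"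
    unfolding wz_def wzbar_def cmod_wirtinger_power2 ..
  finally show ?thesis unfolding sum_Basis_vec_complex sum_divide_distrib .
qed

lemma Ck_on_normD_power2:
  assumes "open S" "Ck_on 3 S f"
  shows "Ck_on 2 S (\<lambda>z. (normD f z)\<^sup>2)"
proof -
  have "Ck_on 2 S (\<lambda>z. (\<Sum>b\<in>Basis. (cmod (dirderiv f b z))\<^sup>2) / 2)"
    using assms Ck_on_dirderiv[OF assms(1), of 2 f]
    by (intro Ck_on_bounded_linear[OF bounded_linear_divide] Ck_on_sum Ck_on_cmod_power2) auto
  then show ?thesis by (simp add: normD_power2)
qed

lemma dirderiv_half_add_mult:
  fixes A B :: "'a::real_normed_vector \<Rightarrow> complex"
  assumes "A differentiable (at x)" "B differentiable (at x)"
  shows "dirderiv (\<lambda>z. (A z + c * B z) / 2) v x = (dirderiv A v x + c * dirderiv B v x) / 2"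
proof -
  have "((\<lambda>z. (A z + c * B z) / 2) has_derivative
     (\<lambda>h. (frechet_derivative A (at x) h + c * frechet_derivative B (at x) h) / 2)) (at x)"
    using assms by (auto simp: frechet_derivative_works intro!: derivative_eq_intros)
  from dirderiv_at[OF this] show ?thesis by (simp add: dirderiv_def)
qed

lemma laplacian_eq_real_laplacian:
  assumes S: "open S" "Ck_on 2 S f" and z: "z \<in> S"
  shows "laplacian f z = real_laplacian f z"
proof -
  have "4 * wz k (wzbar k f) z
      = dirderiv (dirderiv f (axis k 1)) (axis k 1) z + dirderiv (dirderiv f (axis k \<i>)) (axis k \<i>) z"
    for k
  proof -
    have "wzbar k f = (\<lambda>z. (dirderiv f (axis k 1) z + \<i> * dirderiv f (axis k \<i>) z) / 2)"
      by (simp add: wzbar_def[abs_def])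
    then have dv: "dirderiv (wzbar k f) v z
        = (dirderiv (dirderiv f (axis k 1)) v z + \<i> * dirderiv (dirderiv f (axis k \<i>)) v z) / 2" for v
      using Ck_on_2_dirderiv_differentiable[OF S z] by (simp add: dirderiv_half_add_mult)
    show ?thesis
      unfolding wz_def[of k "wzbar k f"] dv dirderiv2_commute[OF S z, of "axis k \<i>" "axis k 1"]
      by (simp add: algebra_simps) (simp add: field_simps)
  qed
  then show ?thesis unfolding laplacian_def real_laplacian_def sum_Basis_vec_complex by simp
qed

lemma Re_wirtinger_gradient_laplacian:
  assumes S: "open S" "Ck_on 2 S f" and z: "z \<in> S"
  shows "Re (\<Sum>k\<in>UNIV. cnj (wz k f z) * wz k (laplacian f) z + cnj (wzbar k f z) * wzbar k (laplacian f) z)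
    = (\<Sum>b\<in>Basis. Re (cnj (dirderiv f b z) * dirderiv (real_laplacian f) b z)) / 2"
proof -
  have "dirderiv (laplacian f) v z = dirderiv (real_laplacian f) v z" for v
    using dirderiv_cong[OF S(1) z laplacian_eq_real_laplacian[OF S]] .
  then show ?thesis
    unfolding wz_def wzbar_def cnj_wirtinger_mult sum_Basis_vec_complex
    by (simp add: sum_divide_distrib)
qed

lemma real_laplacian_normD_power2:
  fixes f :: "complex^'n::finite \<Rightarrow> complex"
  assumes S: "open S" "Ck_on 3 S f" and z: "z \<in> S"
  shows "real_laplacian (\<lambda>z. (normD f z)\<^sup>2) z
    = (\<Sum>b\<in>Basis. \<Sum>c\<in>Basis. (cmod (dirderiv (dirderiv f b) c z))\<^sup>2)
      + 2 * Re (\<Sum>k\<in>UNIV. cnj (wz k f z) * wz k (laplacian f) z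
          + cnj (wzbar k f z) * wzbar k (laplacian f) z)"
proof -
  let ?U = "\<lambda>z. \<Sum>b\<in>Basis. (cmod (dirderiv f b z))\<^sup>2"
  have f2: "Ck_on 2 S f" using Ck_on_Suc_imp_Ck_on[of 2] S(2) by simp
  have "Ck_on 2 S ?U"
    using S Ck_on_dirderiv[OF S(1), of 2 f] by (intro Ck_on_sum Ck_on_cmod_power2) auto
  then have "real_laplacian (\<lambda>z. ?U z / 2) z = real_laplacian ?U z / 2"
    using real_laplacian_bounded_linear[OF S(1) _ z bounded_linear_divide] by blast
  then show ?thesis
    unfolding normD_power2 real_laplacian_sum_cmod_dirderiv_power2[OF S z]
      Re_wirtinger_gradient_laplacian[OF S(1) f2 z] by simp
qed

section \<open>The sub-mean-value property\<close>

lemma integrable_continuous_cball: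
  fixes f :: "'a::euclidean_space \<Rightarrow> real"
  assumes "continuous_on (cball a r) f"
  shows "f integrable_on cball a r"
proof -
  have "compact (f ` cball a r)" using compact_continuous_image[OF assms] by simp
  then obtain B where B: "\<And>x. x \<in> cball a r \<Longrightarrow> norm (f x) \<le> B"
    using compact_imp_bounded bounded_iff by (metis imageI)
  show ?thesis
  proof (rule measurable_bounded_by_integrable_imp_integrable_real)
    show "f \<in> borel_measurable (lebesgue_on (cball a r))"
      by (rule continuous_imp_measurable_on_sets_lebesgue[OF assms])
        (simp add: lmeasurable_cball fmeasurableD)
    show "(\<lambda>x. B) integrable_on cball a r" by (rule integrable_on_const[OF lmeasurable_cball])
    show "\<And>x. x \<in> cball a r \<Longrightarrow> \<bar>f x\<bar> \<le> B" using B by simp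
    show "cball a r \<in> sets lebesgue" by (simp add: lmeasurable_cball fmeasurableD)
  qed
qed

lemma measure_cball_pos:
  fixes a :: "'a::euclidean_space"
  assumes "r > 0"
  shows "measure lebesgue (cball a r) > 0"
  using content_cball_pos[OF assms] by (simp add: measure_completion)

lemma has_integral_affinity_UNIV:
  fixes G :: "'a::euclidean_space \<Rightarrow> real"
  assumes G: "(G has_integral J) UNIV" and K: "bounded K" "\<And>x. x \<notin> K \<Longrightarrow> G x = 0"
    and m: "m > 0"
  shows "((\<lambda>y. G (m *\<^sub>R y + c)) has_integral J / m ^ DIM('a)) UNIV"
proof -
  obtain e where e: "K \<subseteq> cbox (-e) e" using bounded_subset_cbox_symmetric[OF K(1)] by blast
  have "G integrable_on cbox (-e) e" using integrable_on_subcbox G by blast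
  then have "(G has_integral integral (cbox (-e) e) G) (cbox (-e) e)" by blast
  moreover from this have "(G has_integral integral (cbox (-e) e) G) UNIV"
    by (rule has_integral_on_superset) (use e K(2) in auto)
  ultimately have "(G has_integral J) (cbox (-e) e)" using G has_integral_unique by metis
  from has_integral_affinity[OF this, of m c]
  have "((\<lambda>y. G (m *\<^sub>R y + c)) has_integral (1 / m ^ DIM('a)) *\<^sub>R J)
      ((\<lambda>x. (1 / m) *\<^sub>R x + - ((1 / m) *\<^sub>R c)) ` cbox (-e) e)"
    using m by simp
  then have "((\<lambda>y. G (m *\<^sub>R y + c)) has_integral (1 / m ^ DIM('a)) *\<^sub>R J) UNIV"
  proof (rule has_integral_on_superset)
    fix y assume "y \<notin> (\<lambda>x. (1 / m) *\<^sub>R x + - ((1 / m) *\<^sub>R c)) ` cbox (- e) e"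
    then have "m *\<^sub>R y + c \<notin> cbox (-e) e"
      using m by (auto simp: image_iff intro!: bexI[of _ "m *\<^sub>R y + c"] simp: algebra_simps)
    then show "G (m *\<^sub>R y + c) = 0" using e K(2) by blast
  qed auto
  then show ?thesis by (simp add: divide_inverse_commute)
qed

lemma has_integral_cball_rescale:
  fixes g :: "'a::euclidean_space \<Rightarrow> real"
  assumes \<rho>: "\<rho> > 0" and g: "g integrable_on cball a \<rho>"
  shows "((\<lambda>y. g (a + \<rho> *\<^sub>R y)) has_integral integral (cball a \<rho>) g / \<rho> ^ DIM('a)) (cball 0 1)"
proof -
  define G where "G x = (if x \<in> cball a \<rho> then g x else 0)" for x
  have "(G has_integral integral (cball a \<rho>) g) UNIV"
    unfolding G_def using g has_integral_restrict_UNIV integrable_integral by blast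
  moreover have "\<And>x. x \<notin> cball a \<rho> \<Longrightarrow> G x = 0" by (simp add: G_def)
  ultimately have "((\<lambda>y. G (\<rho> *\<^sub>R y + a)) has_integral integral (cball a \<rho>) g / \<rho> ^ DIM('a)) UNIV"
    using has_integral_affinity_UNIV[OF _ bounded_cball _ \<rho>] by blast
  moreover have "G (\<rho> *\<^sub>R y + a) = (if y \<in> cball 0 1 then g (a + \<rho> *\<^sub>R y) else 0)" for y
  proof -
    have "(\<rho> *\<^sub>R y + a \<in> cball a \<rho>) = (y \<in> cball 0 1)"
      using \<rho> by (simp add: dist_norm mem_cball)
    then show ?thesis by (simp add: G_def add.commute)
  qed
  ultimately show ?thesis using has_integral_restrict_UNIV by fastforce
qed

lemma dirderiv_bounded_on_compact:
  fixes g :: "'a::euclidean_space \<Rightarrow> real"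
  assumes S: "open S" and g: "Ck_on (Suc k) S g" and K: "compact K" "K \<subseteq> S"
  obtains C where "C \<ge> 0" "\<And>z v. z \<in> K \<Longrightarrow> \<bar>dirderiv g v z\<bar> \<le> C * norm v"
proof -
  have "\<exists>C. \<forall>z\<in>K. \<bar>dirderiv g b z\<bar> \<le> C" for b
  proof -
    have "continuous_on K (dirderiv g b)"
      using Ck_on_imp_continuous_on[OF Ck_on_dirderiv[OF S g]] K(2) continuous_on_subset by blast
    then have "compact (dirderiv g b ` K)" using compact_continuous_image K(1) by blast
    then show ?thesis using compact_imp_bounded bounded_iff by (metis imageI real_norm_def)
  qed
  then obtain Cb where Cb: "\<And>b z. z \<in> K \<Longrightarrow> \<bar>dirderiv g b z\<bar> \<le> Cb b" by metis
  define C where "C = (\<Sum>b\<in>Basis. \<bar>Cb b\<bar>)"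
  have "\<bar>dirderiv g v z\<bar> \<le> C * norm v" if z: "z \<in> K" for z v
  proof -
    have "\<bar>dirderiv g v z\<bar> = \<bar>\<Sum>b\<in>Basis. (v \<bullet> b) * dirderiv g b z\<bar>"
      using dirderiv_euclidean_expansion[OF Ck_on_Suc_has_derivative[OF g]] z K(2) by auto
    also have "\<dots> \<le> (\<Sum>b\<in>Basis. \<bar>v \<bullet> b\<bar> * \<bar>dirderiv g b z\<bar>)"
      by (rule order_trans[OF sum_abs]) (simp add: abs_mult)
    also have "\<dots> \<le> (\<Sum>b\<in>Basis. norm v * \<bar>Cb b\<bar>)"
    proof (rule sum_mono)
      fix b :: 'a assume "b \<in> Basis"
      then have "\<bar>v \<bullet> b\<bar> \<le> norm v" by (rule Basis_le_norm)
      moreover have "\<bar>dirderiv g b z\<bar> \<le> \<bar>Cb b\<bar>" using Cb[OF z, of b] by simp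
      ultimately show "\<bar>v \<bullet> b\<bar> * \<bar>dirderiv g b z\<bar> \<le> norm v * \<bar>Cb b\<bar>"
        by (intro mult_mono) auto
    qed
    finally show ?thesis by (simp add: C_def sum_distrib_left mult.commute)
  qed
  moreover have "C \<ge> 0" by (simp add: C_def sum_nonneg)
  ultimately show ?thesis using that by blast
qed

lemma Ck_on_Suc_lipschitz_on_compact_convex:
  fixes g :: "'a::euclidean_space \<Rightarrow> real"
  assumes S: "open S" and g: "Ck_on (Suc k) S g" and K: "compact K" "convex K" "K \<subseteq> S"
  obtains C where "C \<ge> 0" "\<And>x y. x \<in> K \<Longrightarrow> y \<in> K \<Longrightarrow> \<bar>g x - g y\<bar> \<le> C * norm (x - y)"
proof -
  obtain C where C: "C \<ge> 0" "\<And>z v. z \<in> K \<Longrightarrow> \<bar>dirderiv g v z\<bar> \<le> C * norm v"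
    using dirderiv_bounded_on_compact[OF S g K(1,3)] by blast
  have "norm (g x - g y) \<le> C * norm (x - y)" if "x \<in> K" "y \<in> K" for x y
  proof (rule differentiable_bound[OF K(2) _ _ that])
    fix z assume z: "z \<in> K"
    show "(g has_derivative (\<lambda>v. dirderiv g v z)) (at z within K)"
      using z K(3) by (intro has_derivative_at_withinI[OF Ck_on_Suc_has_derivative[OF g]]) auto
    show "onorm (\<lambda>v. dirderiv g v z) \<le> C"
      by (rule onorm_le) (use C(2)[OF z] in \<open>simp only: real_norm_def\<close>)
  qed
  then show ?thesis using that[OF C(1)] by (simp only: real_norm_def)
qed

lemma Ck_on_compose_affine:
  "Ck_on k S g \<Longrightarrow> Ck_on k {y. a + c *\<^sub>R y \<in> S} (\<lambda>y. g (a + c *\<^sub>R y))"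
proof (induction k arbitrary: g)
  case 0
  then show ?case
    by (auto intro!: continuous_on_compose2[of S g] continuous_intros)
next
  case (Suc k)
  from Suc.prems obtain g' where g': "\<forall>x\<in>S. (g has_derivative g' x) (at x)"
    "\<forall>v. Ck_on k S (\<lambda>x. g' x v)" by (rule Ck_on_SucE)
  have "((\<lambda>y. a + c *\<^sub>R y) has_derivative (\<lambda>v. c *\<^sub>R v)) (at y)" for y
    by (auto intro!: derivative_eq_intros)
  then have "\<forall>y\<in>{y. a + c *\<^sub>R y \<in> S}.
      ((\<lambda>y. g (a + c *\<^sub>R y)) has_derivative (\<lambda>v. g' (a + c *\<^sub>R y) (c *\<^sub>R v))) (at y)"
    using g'(1) has_derivative_compose by fastforce
  moreover have "\<forall>v. Ck_on k {y. a + c *\<^sub>R y \<in> S} (\<lambda>y. g' (a + c *\<^sub>R y) (c *\<^sub>R v))"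
    using Suc.IH g'(2) by blast
  ultimately show ?case by (rule Ck_on_SucI)
qed

lemma dirderiv_compose_affine:
  assumes "(g has_derivative D) (at (a + c *\<^sub>R y))"
  shows "dirderiv (\<lambda>y. g (a + c *\<^sub>R y)) v y = c *\<^sub>R dirderiv g v (a + c *\<^sub>R y)"
proof -
  have "((\<lambda>y. a + c *\<^sub>R y) has_derivative (\<lambda>v. c *\<^sub>R v)) (at y)"
    by (auto intro!: derivative_eq_intros)
  from has_derivative_compose[OF this assms] have "dirderiv (\<lambda>y. g (a + c *\<^sub>R y)) v y = D (c *\<^sub>R v)"
    by (rule dirderiv_at)
  then show ?thesis
    using linear_cmul[OF has_derivative_linear[OF assms]] dirderiv_at[OF assms] by simp
qed

text \<open>The weight vanishes on the unit sphere and has gradient \<open>-y\<close> inside the unit ball, so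
  integrating by parts against it turns the mean of the radial derivative \<open>y \<bullet> grad u (a + \<rho> y)\<close>
  over the ball into \<open>\<rho>\<close> times a weighted mean of the Laplacian of \<open>u\<close>.\<close>

definition ball_weight :: "'a::real_normed_vector \<Rightarrow> real" where
  "ball_weight y = max 0 ((1 - (norm y)\<^sup>2) / 2)"

lemma ball_weight_eq_0: "1 \<le> norm y \<Longrightarrow> ball_weight y = 0"
  by (simp add: ball_weight_def one_le_power)

lemma ball_weight_bounds: "0 \<le> ball_weight y" "ball_weight y \<le> 1 / 2"
  unfolding ball_weight_def max_def using zero_le_power2[of "norm y"] by auto

lemma ball_weight_lipschitz:
  assumes "norm p \<le> 2" "norm q \<le> 2"
  shows "\<bar>ball_weight p - ball_weight q\<bar> \<le> 2 * norm (p - q)"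
proof -
  have "\<bar>max 0 A - max 0 B\<bar> \<le> \<bar>A - B\<bar>" for A B :: real
    by (auto simp: max_def)
  then have "\<bar>ball_weight p - ball_weight q\<bar> \<le> \<bar>(1 - (norm p)\<^sup>2) / 2 - (1 - (norm q)\<^sup>2) / 2\<bar>"
    unfolding ball_weight_def .
  also have "\<dots> = \<bar>(norm q - norm p) * (norm q + norm p)\<bar> / 2"
  proof -
    have e: "(1 - (norm p)\<^sup>2) / 2 - (1 - (norm q)\<^sup>2) / 2 = (norm q - norm p) * (norm q + norm p) / 2"
      by (simp add: power2_eq_square field_simps)
    show ?thesis unfolding e by simp
  qed
  also have "\<dots> = \<bar>norm q - norm p\<bar> * (norm q + norm p) / 2"
    by (simp add: abs_mult)
  also have "\<dots> \<le> norm (p - q) * 4 / 2"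
  proof -
    have "\<bar>norm q - norm p\<bar> \<le> norm (p - q)" by (metis norm_minus_commute norm_triangle_ineq3)
    moreover have "norm q + norm p \<le> 4" using assms by simp
    ultimately show ?thesis by (intro divide_right_mono mult_mono) auto
  qed
  finally show ?thesis by simp
qed

lemma has_real_derivative_ball_weight_along_line:
  fixes y b :: "'a::real_inner"
  assumes "norm y < 1"
  shows "((\<lambda>t. ball_weight (y + t *\<^sub>R b)) has_real_derivative - (y \<bullet> b)) (at 0)"
proof (rule has_field_derivative_transform_within_open)
  define \<phi> where "\<phi> t = (1 - (y \<bullet> y + 2 * t * (y \<bullet> b) + t\<^sup>2 * (b \<bullet> b))) / 2" for t :: real
  show "(\<phi> has_real_derivative - (y \<bullet> b)) (at 0)"
    unfolding \<phi>_def by (auto intro!: derivative_eq_intros)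
  show "open {t. norm (y + t *\<^sub>R b) < 1}"
    by (rule open_Collect_less) (intro continuous_intros)+
  show "0 \<in> {t. norm (y + t *\<^sub>R b) < 1}" using assms by simp
  fix t assume "t \<in> {t. norm (y + t *\<^sub>R b) < 1}"
  then have "(norm (y + t *\<^sub>R b))\<^sup>2 < 1" by (simp add: power_less_one_iff)
  moreover have "(norm (y + t *\<^sub>R b))\<^sup>2 = y \<bullet> y + 2 * t * (y \<bullet> b) + t\<^sup>2 * (b \<bullet> b)"
    unfolding power2_norm_eq_inner
    by (simp add: inner_commute power2_eq_square algebra_simps)
  ultimately show "\<phi> t = ball_weight (y + t *\<^sub>R b)"
    by (simp add: \<phi>_def ball_weight_def)
qed

lemma difference_quotient_along_le:
  fixes F :: "'a::real_normed_vector \<Rightarrow> real"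
  assumes K: "\<And>x. x \<notin> K \<Longrightarrow> F x = 0" "\<And>x. x \<in> K \<Longrightarrow> norm x \<le> B"
    and lip: "\<bar>F (x + t *\<^sub>R b) - F x\<bar> \<le> M * t" and t: "0 < t" "t \<le> 1" and M: "M \<ge> 0"
  shows "\<bar>(F (x + t *\<^sub>R b) - F x) / t\<bar> \<le> (if norm x \<le> B + norm b then M else 0)"
proof (cases "x \<notin> K \<and> x + t *\<^sub>R b \<notin> K")
  case True
  then show ?thesis using M K(1) by simp
next
  case False
  have "norm x \<le> B + norm b"
  proof (cases "x \<in> K")
    case True
    then show ?thesis using K(2)[of x] norm_ge_zero[of b] by linarith
  next
    case outside: False
    have "norm x \<le> norm (x + t *\<^sub>R b) + t * norm b"
      using norm_triangle_ineq4[of "x + t *\<^sub>R b" "t *\<^sub>R b"] t by simp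
    moreover have "t * norm b \<le> norm b" using t by (simp add: mult_left_le_one_le)
    ultimately show ?thesis using K(2)[of "x + t *\<^sub>R b"] False outside by linarith
  qed
  moreover have "\<bar>(F (x + t *\<^sub>R b) - F x) / t\<bar> \<le> M"
    using lip t by (simp add: abs_div pos_divide_le_eq)
  ultimately show ?thesis by simp
qed

lemma has_integral_difference_quotient_eq_0:
  fixes F :: "'a::euclidean_space \<Rightarrow> real"
  assumes F: "F integrable_on UNIV" and K: "bounded K" "\<And>x. x \<notin> K \<Longrightarrow> F x = 0"
  shows "((\<lambda>x. (F (x + t *\<^sub>R b) - F x) / t) has_integral 0) UNIV"
proof -
  have FI: "(F has_integral integral UNIV F) UNIV" using F by (rule integrable_integral)
  have "((\<lambda>x. F (x + t *\<^sub>R b)) has_integral integral UNIV F) UNIV"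
    using has_integral_affinity_UNIV[OF FI K, of 1 "t *\<^sub>R b"] by simp
  from has_integral_divide[OF has_integral_diff[OF this FI], of t] show ?thesis by simp
qed

text \<open>The difference quotients along \<open>b\<close> integrate to zero by translation invariance and
  converge dominatedly to \<open>F'\<close>.\<close>

lemma integral_derivative_along_eq_0:
  fixes F F' :: "'a::euclidean_space \<Rightarrow> real"
  assumes F: "F integrable_on UNIV"
    and K: "bounded K" "\<And>x. x \<notin> K \<Longrightarrow> F x = 0"
    and lip: "\<And>x t. 0 < t \<Longrightarrow> t \<le> 1 \<Longrightarrow> \<bar>F (x + t *\<^sub>R b) - F x\<bar> \<le> M * t"
    and N: "negligible N"
    and der: "\<And>x. x \<notin> N \<Longrightarrow> ((\<lambda>t. F (x + t *\<^sub>R b)) has_real_derivative F' x) (at 0)"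
  shows "F' integrable_on UNIV" "integral UNIV F' = 0"
proof -
  have M: "M \<ge> 0" using lip[of 1 0] by (smt (verit) abs_ge_zero)
  obtain B where B: "\<And>x. x \<in> K \<Longrightarrow> norm x \<le> B" using K(1) bounded_iff by blast
  define tk where "tk k = inverse (real (Suc k))" for k
  have tk: "tk k > 0" "tk k \<le> 1" for k unfolding tk_def by (auto simp: inverse_le_1_iff)
  define g where "g k x = (if x \<in> N then 0 else (F (x + tk k *\<^sub>R b) - F x) / tk k)" for k x
  define G where "G x = (if x \<in> N then 0 else F' x)" for x
  have gI: "(g k has_integral 0) UNIV" for k
    using has_integral_difference_quotient_eq_0[OF F K, of "tk k" b]
    by (rule has_integral_spike[OF N, rotated]) (auto simp: g_def)
  define h where "h x = (if norm x \<le> B + norm b then M else 0)" for x :: 'a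
  have hI: "h integrable_on UNIV"
  proof -
    have "h integrable_on cball 0 (B + norm b)"
      by (rule integrable_eq[OF integrable_on_const[OF lmeasurable_cball, of M]]) (auto simp: h_def)
    then show ?thesis by (rule integrable_on_superset) (auto simp: h_def)
  qed
  have bound: "norm (g k x) \<le> h x" for k x
  proof -
    have "\<bar>(F (x + tk k *\<^sub>R b) - F x) / tk k\<bar> \<le> h x"
      unfolding h_def using difference_quotient_along_le[of K F B x "tk k" b M] K(2) B lip[OF tk] tk M
      by blast
    moreover have "h x \<ge> 0" using M by (simp add: h_def)
    ultimately show ?thesis by (simp add: g_def)
  qed
  have conv: "(\<lambda>k. g k x) \<longlonglongrightarrow> G x" for x
  proof (cases "x \<in> N")
    case False
    have "(\<lambda>t. (F (x + t *\<^sub>R b) - F x) / t) \<midarrow>0\<rightarrow> F' x"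
      using der[OF False] unfolding DERIV_def by simp
    moreover have "tk \<longlonglongrightarrow> 0" unfolding tk_def using LIMSEQ_inverse_real_of_nat .
    moreover have "\<forall>n. tk n \<noteq> 0" using tk by (metis less_irrefl)
    ultimately have "(\<lambda>k. (F (x + tk k *\<^sub>R b) - F x) / tk k) \<longlonglongrightarrow> F' x"
      unfolding LIMSEQ_SEQ_conv[symmetric] by blast
    then show ?thesis using False by (simp add: g_def G_def)
  qed (simp add: g_def G_def)
  have gint: "g k integrable_on UNIV" for k using gI by blast
  from dominated_convergence[OF gint hI _ conv] bound
  have GI: "G integrable_on UNIV" and lim: "(\<lambda>k. integral UNIV (g k)) \<longlonglongrightarrow> integral UNIV G"
    by auto
  have "(\<lambda>k. integral UNIV (g k)) = (\<lambda>k. 0)" using gI integral_unique by blast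
  with lim have "integral UNIV G = 0" by (simp add: LIMSEQ_const_iff)
  moreover have "integral UNIV F' = integral UNIV G"
    by (rule integral_spike[OF N]) (auto simp: G_def)
  moreover have "F' integrable_on UNIV"
    by (rule integrable_spike[OF GI N]) (auto simp: G_def)
  ultimately show "F' integrable_on UNIV" "integral UNIV F' = 0" by auto
qed

lemma ball_weight_mult_lipschitz_along:
  fixes H :: "'a::real_normed_vector \<Rightarrow> real"
  assumes C1: "\<And>p. norm p \<le> 2 \<Longrightarrow> \<bar>H p\<bar> \<le> C1"
    and C2: "C2 \<ge> 0" "\<And>p q. norm p \<le> 2 \<Longrightarrow> norm q \<le> 2 \<Longrightarrow> \<bar>H p - H q\<bar> \<le> C2 * norm (p - q)"
    and b: "norm b = 1" and t: "0 < t" "t \<le> 1"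
  shows "\<bar>ball_weight (y + t *\<^sub>R b) * H (y + t *\<^sub>R b) - ball_weight y * H y\<bar> \<le> (2 * C1 + C2 / 2) * t"
proof (cases "norm y \<le> 1 \<or> norm (y + t *\<^sub>R b) \<le> 1")
  case False
  moreover have "C1 \<ge> 0" using C1[of 0] by simp
  ultimately show ?thesis using C2(1) t by (simp add: ball_weight_eq_0)
next
  case True
  then have y2: "norm y \<le> 2" and yt2: "norm (y + t *\<^sub>R b) \<le> 2"
    using norm_triangle_ineq[of y "t *\<^sub>R b"] norm_triangle_ineq4[of "y + t *\<^sub>R b" "t *\<^sub>R b"] b t
    by auto
  have "ball_weight (y + t *\<^sub>R b) * H (y + t *\<^sub>R b) - ball_weight y * H y
      = (ball_weight (y + t *\<^sub>R b) - ball_weight y) * H (y + t *\<^sub>R b)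
        + ball_weight y * (H (y + t *\<^sub>R b) - H y)"
    by (simp add: algebra_simps)
  also have "\<bar>\<dots>\<bar> \<le> \<bar>ball_weight (y + t *\<^sub>R b) - ball_weight y\<bar> * \<bar>H (y + t *\<^sub>R b)\<bar>
      + \<bar>ball_weight y\<bar> * \<bar>H (y + t *\<^sub>R b) - H y\<bar>"
    by (metis abs_mult abs_triangle_ineq)
  also have "\<dots> \<le> (2 * t) * C1 + (1 / 2) * (C2 * t)"
    using ball_weight_lipschitz[OF yt2 y2] C1[OF yt2] C2(2)[OF yt2 y2] ball_weight_bounds[of y] b t
    by (intro add_mono mult_mono) auto
  finally show ?thesis by (simp add: algebra_simps)
qed

lemma integral_weighted_derivative_along_eq_0:
  fixes H :: "'a::euclidean_space \<Rightarrow> real"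
  assumes T: "open T" "cball 0 2 \<subseteq> T" "Ck_on (Suc 0) T H" and b: "norm b = 1"
  defines "F' \<equiv> \<lambda>y. if norm y < 1 then - (y \<bullet> b) * H y + ball_weight y * dirderiv H b y else 0"
  shows "F' integrable_on UNIV" "integral UNIV F' = 0"
proof -
  define F where "F y = ball_weight y * H y" for y
  have Hc: "continuous_on (cball 0 2) H"
    using Ck_on_imp_continuous_on[OF T(3)] T(2) continuous_on_subset by blast
  then have "compact (H ` cball 0 2)" by (rule compact_continuous_image) simp
  then obtain C1 where C1: "\<And>p. norm p \<le> 2 \<Longrightarrow> \<bar>H p\<bar> \<le> C1"
    using compact_imp_bounded bounded_iff by (metis imageI mem_cball_0 real_norm_def)
  obtain C2 where C2: "C2 \<ge> 0" "\<And>p q. p \<in> cball 0 2 \<Longrightarrow> q \<in> cball 0 2 \<Longrightarrow> \<bar>H p - H q\<bar> \<le> C2 * norm (p - q)"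
    using Ck_on_Suc_lipschitz_on_compact_convex[OF T(1,3) compact_cball convex_cball T(2)] by blast
  have supp: "\<And>y. y \<notin> cball 0 1 \<Longrightarrow> F y = 0" by (simp add: F_def ball_weight_eq_0)
  have "continuous_on (cball 0 1) F"
    unfolding F_def ball_weight_def by (intro continuous_intros continuous_on_subset[OF Hc]) auto
  then have "F integrable_on cball 0 1" by (rule integrable_continuous_cball)
  then have F: "F integrable_on UNIV" by (rule integrable_on_superset) (use supp in auto)
  have lip: "\<bar>F (y + t *\<^sub>R b) - F y\<bar> \<le> (2 * C1 + C2 / 2) * t" if "0 < t" "t \<le> 1" for y t
    unfolding F_def using C1 C2 b that by (intro ball_weight_mult_lipschitz_along) auto
  have "((\<lambda>t. F (y + t *\<^sub>R b)) has_real_derivative F' y) (at 0)" if "y \<notin> sphere 0 1" for y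
  proof (cases "norm y < 1")
    case True
    then have "y \<in> T" using T(2) by auto
    then have "(H has_derivative (\<lambda>v. dirderiv H v y)) (at (y + 0 *\<^sub>R b))"
      using Ck_on_Suc_has_derivative[OF T(3)] by simp
    from DERIV_mult[OF has_real_derivative_ball_weight_along_line[OF True]
        has_real_derivative_along_line[OF this]]
    show ?thesis using True by (simp add: F_def F'_def algebra_simps)
  next
    case False
    with that have y1: "norm y > 1" by auto
    show ?thesis
    proof (rule has_field_derivative_transform_within_open[of "\<lambda>t. 0" _ 0 "{t. 1 < norm (y + t *\<^sub>R b)}"])
      show "((\<lambda>t. 0) has_real_derivative F' y) (at 0)" using False by (simp add: F'_def)
      show "open {t. 1 < norm (y + t *\<^sub>R b)}"
        by (rule open_Collect_less) (intro continuous_intros)+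
    qed (use y1 in \<open>auto simp: F_def ball_weight_eq_0\<close>)
  qed
  from integral_derivative_along_eq_0[OF F bounded_cball[of 0 1] supp lip negligible_sphere[of 0 1] this]
  show "F' integrable_on UNIV" "integral UNIV F' = 0" by auto
qed

lemma has_integral_weighted_partial_derivative_eq_0:
  fixes u :: "'a::euclidean_space \<Rightarrow> real"
  assumes S: "open S" and u: "Ck_on 2 S u" and sub: "cball a (2 * r) \<subseteq> S"
    and \<rho>: "0 \<le> \<rho>" "\<rho> \<le> r" and b: "b \<in> Basis"
  shows "((\<lambda>y. if norm y < 1 then - (y \<bullet> b) * dirderiv u b (a + \<rho> *\<^sub>R y)
      + ball_weight y * (\<rho> * dirderiv (dirderiv u b) b (a + \<rho> *\<^sub>R y)) else 0) has_integral 0) UNIV"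
proof -
  have u2: "Ck_on (Suc (Suc 0)) S u" using u by (simp add: numeral_2_eq_2)
  define T where "T = {y. a + \<rho> *\<^sub>R y \<in> S}"
  have T: "open T"
    unfolding T_def using continuous_open_vimage[OF S, of "\<lambda>y. a + \<rho> *\<^sub>R y"]
    by (simp add: vimage_def continuous_intros)
  have inS: "a + \<rho> *\<^sub>R y \<in> S" if "norm y \<le> 2" for y
  proof -
    have "dist a (a + \<rho> *\<^sub>R y) = \<rho> * norm y" using \<rho> by (simp add: dist_norm)
    also have "\<dots> \<le> r * 2" using \<rho> that by (intro mult_mono) auto
    finally show ?thesis using sub by (auto simp: mult.commute)
  qed
  then have T2: "cball 0 2 \<subseteq> T" by (auto simp: T_def)
  define H where "H = (\<lambda>y. dirderiv u b (a + \<rho> *\<^sub>R y))"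
  have H: "Ck_on (Suc 0) T H"
    unfolding H_def T_def by (rule Ck_on_compose_affine[OF Ck_on_dirderiv[OF S u2]])
  have dH: "dirderiv H b y = \<rho> * dirderiv (dirderiv u b) b (a + \<rho> *\<^sub>R y)" if "norm y < 1" for y
  proof -
    have "a + \<rho> *\<^sub>R y \<in> S" using inS that by simp
    from dirderiv_compose_affine[OF Ck_on_Suc_has_derivative[OF Ck_on_dirderiv[OF S u2] this]]
    show ?thesis by (simp add: H_def)
  qed
  define G where "G = (\<lambda>y. if norm y < 1 then - (y \<bullet> b) * H y + ball_weight y * dirderiv H b y else 0)"
  have "G integrable_on UNIV" "integral UNIV G = 0"
    using integral_weighted_derivative_along_eq_0[OF T T2 H] b unfolding G_def by auto
  then have "(G has_integral 0) UNIV" by (metis integrable_integral)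
  moreover have "G = (\<lambda>y. if norm y < 1 then - (y \<bullet> b) * dirderiv u b (a + \<rho> *\<^sub>R y)
      + ball_weight y * (\<rho> * dirderiv (dirderiv u b) b (a + \<rho> *\<^sub>R y)) else 0)"
    by (rule ext) (simp add: G_def dH, simp add: H_def)
  ultimately show ?thesis by simp
qed

lemma integral_radial_derivative_nonneg:
  fixes u :: "'a::euclidean_space \<Rightarrow> real"
  assumes S: "open S" and u: "Ck_on 2 S u" and sub: "cball a (2 * r) \<subseteq> S"
    and lap: "\<And>x. x \<in> S \<Longrightarrow> real_laplacian u x \<ge> 0" and \<rho>: "0 \<le> \<rho>" "\<rho> \<le> r"
  shows "integral (cball 0 1) (\<lambda>y. dirderiv u y (a + \<rho> *\<^sub>R y)) \<ge> 0"
proof -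
  have u2: "Ck_on (Suc (Suc 0)) S u" using u by (simp add: numeral_2_eq_2)
  have inS: "a + \<rho> *\<^sub>R y \<in> S" if "norm y \<le> 1" for y
  proof -
    have "dist a (a + \<rho> *\<^sub>R y) \<le> r * 2" using \<rho> that by (simp add: dist_norm mult_mono)
    then show ?thesis using sub by (auto simp: mult.commute)
  qed
  define F where "F = (\<lambda>b y. if norm y < 1 then - (y \<bullet> b) * dirderiv u b (a + \<rho> *\<^sub>R y)
      + ball_weight y * (\<rho> * dirderiv (dirderiv u b) b (a + \<rho> *\<^sub>R y)) else 0)"
  have "(F b has_integral 0) UNIV" if "b \<in> Basis" for b
    unfolding F_def by (rule has_integral_weighted_partial_derivative_eq_0[OF S u sub \<rho> that])
  then have Fs: "((\<lambda>y. \<Sum>b\<in>Basis. F b y) has_integral 0) UNIV"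
    using has_integral_sum[of Basis F "\<lambda>_. 0" UNIV] by simp
  define g where "g y = dirderiv u y (a + \<rho> *\<^sub>R y)" for y
  have g_expand: "g y = (\<Sum>b\<in>Basis. (y \<bullet> b) * dirderiv u b (a + \<rho> *\<^sub>R y))" if "norm y \<le> 1" for y
    using dirderiv_euclidean_expansion[OF Ck_on_Suc_has_derivative[OF u2 inS[OF that]], of y]
    by (simp add: g_def)
  have "continuous_on (cball 0 1) (\<lambda>y. dirderiv u b (a + \<rho> *\<^sub>R y))" for b
    using inS by (intro continuous_on_compose2[OF Ck_on_imp_continuous_on[OF Ck_on_dirderiv[OF S u2]]]
        continuous_intros) auto
  then have "continuous_on (cball 0 1) (\<lambda>y. \<Sum>b\<in>Basis. (y \<bullet> b) * dirderiv u b (a + \<rho> *\<^sub>R y))"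
    by (intro continuous_intros)
  then have "continuous_on (cball 0 1) g" by (rule continuous_on_eq) (simp add: g_expand)
  then have P: "((\<lambda>y. if y \<in> cball 0 1 then g y else 0) has_integral integral (cball 0 1) g) UNIV"
    using integrable_continuous_cball has_integral_restrict_UNIV integrable_integral by blast
  define Q where "Q y = (if norm y < 1 then ball_weight y * (\<rho> * real_laplacian u (a + \<rho> *\<^sub>R y)) else 0)"
    for y
  have QFP: "Q y = (\<Sum>b\<in>Basis. F b y) + (if y \<in> cball 0 1 then g y else 0)" if "y \<notin> sphere 0 1" for y
  proof (cases "norm y < 1")
    case True
    then have "(\<Sum>b\<in>Basis. F b y) = (\<Sum>b\<in>Basis. - ((y \<bullet> b) * dirderiv u b (a + \<rho> *\<^sub>R y)))
        + (\<Sum>b\<in>Basis. ball_weight y * (\<rho> * dirderiv (dirderiv u b) b (a + \<rho> *\<^sub>R y)))"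
      by (simp add: F_def flip: sum.distrib)
    also have "\<dots> = - g y + ball_weight y * (\<rho> * real_laplacian u (a + \<rho> *\<^sub>R y))"
      using True by (simp add: g_expand real_laplacian_def sum_negf sum_distrib_left)
    finally show ?thesis using True by (simp add: Q_def)
  qed (use that in \<open>auto simp: Q_def F_def\<close>)
  have "(Q has_integral 0 + integral (cball 0 1) g) UNIV"
    by (rule has_integral_spike[OF negligible_sphere[of 0 1] _ has_integral_add[OF Fs P]])
      (simp add: QFP)
  moreover have "Q y \<ge> 0" for y
    using lap[OF inS] ball_weight_bounds(1)[of y] \<rho> by (simp add: Q_def)
  ultimately have "0 \<le> 0 + integral (cball 0 1) g" by (rule has_integral_nonneg)
  then show ?thesis by (simp add: g_def[abs_def])
qed

lemma affine_mem_cball: "\<bar>s\<bar> \<le> r \<Longrightarrow> norm y \<le> 1 \<Longrightarrow> a + s *\<^sub>R y \<in> cball a r"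
  by (simp add: dist_norm mult_mono[of "\<bar>s\<bar>" r "norm y" 1, simplified])

lemma integrable_rescaled_cball:
  fixes u :: "'a::euclidean_space \<Rightarrow> real"
  assumes "continuous_on S u" "cball a r \<subseteq> S" "\<bar>s\<bar> \<le> r"
  shows "(\<lambda>y. u (a + s *\<^sub>R y)) integrable_on cball 0 1"
proof (rule integrable_continuous_cball, rule continuous_on_compose2[OF assms(1)])
  show "continuous_on (cball 0 1) (\<lambda>y. a + s *\<^sub>R y)" by (intro continuous_intros)
  show "(\<lambda>y. a + s *\<^sub>R y) ` cball 0 1 \<subseteq> S" using affine_mem_cball assms(2,3) by fastforce
qed

lemma integral_rescaled_difference_quotient_tendsto:
  fixes u :: "'a::euclidean_space \<Rightarrow> real"
  assumes S: "open S" and u: "Ck_on (Suc 0) S u" and sub: "cball a r \<subseteq> S" and \<rho>: "\<bar>\<rho>\<bar> \<le> r"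
    and Y: "Y \<longlonglongrightarrow> 0" "\<And>n. Y n \<noteq> 0" "\<And>n. \<bar>\<rho> + Y n\<bar> \<le> r"
  shows "(\<lambda>n. integral (cball 0 1) (\<lambda>y. (u (a + (\<rho> + Y n) *\<^sub>R y) - u (a + \<rho> *\<^sub>R y)) / Y n))
    \<longlonglongrightarrow> integral (cball 0 1) (\<lambda>y. dirderiv u y (a + \<rho> *\<^sub>R y))"
proof -
  define q where "q n y = (u (a + (\<rho> + Y n) *\<^sub>R y) - u (a + \<rho> *\<^sub>R y)) / Y n" for n y
  note uint = integrable_rescaled_cball[OF Ck_on_imp_continuous_on[OF u] sub]
  have qint: "q n integrable_on cball 0 1" for n
    unfolding q_def using uint \<rho> Y(3) by (intro integrable_on_divide integrable_diff) auto
  obtain C where C: "C \<ge> 0" "\<And>x z. x \<in> cball a r \<Longrightarrow> z \<in> cball a r \<Longrightarrow> \<bar>u x - u z\<bar> \<le> C * norm (x - z)"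
    using Ck_on_Suc_lipschitz_on_compact_convex[OF S u compact_cball convex_cball sub] by blast
  have qbound: "norm (q n y) \<le> C" if y: "y \<in> cball 0 1" for n y
  proof -
    have "a + (\<rho> + Y n) *\<^sub>R y \<in> cball a r" "a + \<rho> *\<^sub>R y \<in> cball a r"
      using affine_mem_cball[OF Y(3)] affine_mem_cball[OF \<rho>] y by auto
    from C(2)[OF this]
    have "\<bar>u (a + (\<rho> + Y n) *\<^sub>R y) - u (a + \<rho> *\<^sub>R y)\<bar> \<le> C * norm (Y n *\<^sub>R y)"
      by (simp add: algebra_simps)
    also have "\<dots> \<le> C * \<bar>Y n\<bar>"
      using y C(1) by (simp add: mult_left_mono mult_left_le)
    finally show ?thesis using Y(2)[of n] by (simp add: q_def abs_divide divide_le_eq)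
  qed
  have qconv: "(\<lambda>n. q n y) \<longlonglongrightarrow> dirderiv u y (a + \<rho> *\<^sub>R y)" if y: "y \<in> cball 0 1" for y
  proof -
    have "a + \<rho> *\<^sub>R y \<in> S" using affine_mem_cball[OF \<rho>, of y a] y sub by auto
    then have "(u has_derivative (\<lambda>h. dirderiv u h (a + \<rho> *\<^sub>R y))) (at ((a + \<rho> *\<^sub>R y) + 0 *\<^sub>R y))"
      using Ck_on_Suc_has_derivative[OF u] by simp
    from has_real_derivative_along_line[OF this]
    have "(\<lambda>h. (u ((a + \<rho> *\<^sub>R y) + h *\<^sub>R y) - u (a + \<rho> *\<^sub>R y)) / h) \<midarrow>0\<rightarrow> dirderiv u y (a + \<rho> *\<^sub>R y)"
      unfolding DERIV_def by simp
    then have "(\<lambda>n. (u ((a + \<rho> *\<^sub>R y) + Y n *\<^sub>R y) - u (a + \<rho> *\<^sub>R y)) / Y n)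
        \<longlonglongrightarrow> dirderiv u y (a + \<rho> *\<^sub>R y)"
      using Y(1,2) unfolding LIMSEQ_SEQ_conv[symmetric] by blast
    then show ?thesis by (simp add: q_def algebra_simps)
  qed
  show ?thesis
    using dominated_convergence(2)[OF qint integrable_on_const[OF lmeasurable_cball] qbound qconv]
    by (simp add: q_def)
qed

lemma has_real_derivative_integral_rescaled:
  fixes u :: "'a::euclidean_space \<Rightarrow> real"
  assumes S: "open S" and u: "Ck_on (Suc 0) S u" and sub: "cball a r \<subseteq> S" and \<rho>: "\<bar>\<rho>\<bar> < r"
  shows "((\<lambda>s. integral (cball 0 1) (\<lambda>y. u (a + s *\<^sub>R y))) has_real_derivative
      integral (cball 0 1) (\<lambda>y. dirderiv u y (a + \<rho> *\<^sub>R y))) (at \<rho>)"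
proof -
  define M where "M s = integral (cball 0 1) (\<lambda>y. u (a + s *\<^sub>R y))" for s
  have "(\<lambda>h. (M (\<rho> + h) - M \<rho>) / h) \<midarrow>0\<rightarrow> integral (cball 0 1) (\<lambda>y. dirderiv u y (a + \<rho> *\<^sub>R y))"
    unfolding LIMSEQ_SEQ_conv[symmetric]
  proof (intro allI impI, elim conjE)
    fix X :: "nat \<Rightarrow> real" assume X0: "\<forall>n. X n \<noteq> 0" and X: "X \<longlonglongrightarrow> 0"
    from X \<rho> obtain N where N: "\<And>n. n \<ge> N \<Longrightarrow> \<bar>X n\<bar> < r - \<bar>\<rho>\<bar>"
      unfolding LIMSEQ_def by (metis diff_gt_0_iff_gt dist_real_def diff_zero)
    define Y where "Y = (\<lambda>n. X (n + N))"
    have "\<bar>\<rho> + Y n\<bar> \<le> r" for n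
      using N[of "n + N"] abs_triangle_ineq[of \<rho> "X (n + N)"] by (simp add: Y_def)
    then have Y: "Y \<longlonglongrightarrow> 0" "\<And>n. Y n \<noteq> 0" "\<And>n. \<bar>\<rho> + Y n\<bar> \<le> r"
      using LIMSEQ_ignore_initial_segment[OF X, of N] X0 by (auto simp: Y_def)
    have qeq: "(M (\<rho> + Y n) - M \<rho>) / Y n
        = integral (cball 0 1) (\<lambda>y. (u (a + (\<rho> + Y n) *\<^sub>R y) - u (a + \<rho> *\<^sub>R y)) / Y n)" for n
    proof -
      note integrable_rescaled_cball[OF Ck_on_imp_continuous_on[OF u] sub]
      then show ?thesis
        unfolding M_def using Y(3)[of n] \<rho> by (simp add: integral_diff integral_divide)
    qed
    have "(\<lambda>n. (M (\<rho> + Y n) - M \<rho>) / Y n)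
        \<longlonglongrightarrow> integral (cball 0 1) (\<lambda>y. dirderiv u y (a + \<rho> *\<^sub>R y))"
      unfolding qeq using \<rho> by (intro integral_rescaled_difference_quotient_tendsto[OF S u sub _ Y]) simp
    then show "(\<lambda>n. (M (\<rho> + X n) - M \<rho>) / X n)
        \<longlonglongrightarrow> integral (cball 0 1) (\<lambda>y. dirderiv u y (a + \<rho> *\<^sub>R y))"
      unfolding Y_def by (rule LIMSEQ_offset)
  qed
  then show ?thesis unfolding DERIV_def M_def by simp
qed

text \<open>The mean of \<open>u\<close> over \<open>cball a s\<close>, written as an integral over the unit ball, is
  nondecreasing in \<open>s\<close> and equals \<open>u a\<close> at \<open>s = 0\<close>.\<close>

lemma sub_mean_value_cball:
  fixes u :: "'a::euclidean_space \<Rightarrow> real"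
  assumes S: "open S" and u: "Ck_on 2 S u" and lap: "\<And>x. x \<in> S \<Longrightarrow> real_laplacian u x \<ge> 0"
    and sub: "cball a (2 * r) \<subseteq> S" and \<rho>: "0 < \<rho>" "\<rho> < r"
  shows "u a * measure lebesgue (cball a \<rho>) \<le> integral (cball a \<rho>) u"
proof -
  have u1: "Ck_on (Suc 0) S u"
    using Ck_on_Suc_imp_Ck_on[of 1] u by (simp add: numeral_2_eq_2)
  have "cball a r \<subseteq> cball a (2 * r)" using \<rho> by (intro subset_cball) auto
  with sub have sub1: "cball a r \<subseteq> S" by blast
  define M where "M s = integral (cball 0 1) (\<lambda>y. u (a + s *\<^sub>R y))" for s
  have "M 0 \<le> M \<rho>"
  proof (rule DERIV_nonneg_imp_nondecreasing[of 0 \<rho> M])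
    fix s assume s: "0 \<le> s" "s \<le> \<rho>"
    have "(M has_real_derivative integral (cball 0 1) (\<lambda>y. dirderiv u y (a + s *\<^sub>R y))) (at s)"
      unfolding M_def by (rule has_real_derivative_integral_rescaled[OF S u1 sub1]) (use s \<rho> in simp)
    moreover have "integral (cball 0 1) (\<lambda>y. dirderiv u y (a + s *\<^sub>R y)) \<ge> 0"
      by (rule integral_radial_derivative_nonneg[OF S u sub lap]) (use s \<rho> in auto)
    ultimately show "\<exists>y. (M has_real_derivative y) (at s) \<and> 0 \<le> y" by blast
  qed (use \<rho> in simp)
  moreover have "M 0 = u a * measure lebesgue (cball (0::'a) 1)"
    unfolding M_def lmeasure_integral[OF lmeasurable_cball]
    using integral_mult_right[of "cball (0::'a) 1" "u a" "\<lambda>x. 1"] by simp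
  moreover have "M \<rho> = integral (cball a \<rho>) u / \<rho> ^ DIM('a)"
  proof -
    have "continuous_on (cball a \<rho>) u"
      using Ck_on_imp_continuous_on[OF u] sub1 \<rho> continuous_on_subset
      by (metis less_imp_le order_trans subset_cball)
    then have "u integrable_on cball a \<rho>" by (rule integrable_continuous_cball)
    from has_integral_cball_rescale[OF \<rho>(1) this] show ?thesis
      unfolding M_def by (rule integral_unique)
  qed
  moreover have "measure lebesgue (cball (0::'a) 1) = measure lebesgue (cball a \<rho>) / \<rho> ^ DIM('a)"
    using integral_unique[OF has_integral_cball_rescale[OF \<rho>(1) integrable_on_const[OF lmeasurable_cball]]]
    by (simp add: lmeasure_integral[OF lmeasurable_cball])
  ultimately have "u a * measure lebesgue (cball a \<rho>) / \<rho> ^ DIM('a) \<le> integral (cball a \<rho>) u / \<rho> ^ DIM('a)"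
    by simp
  then show ?thesis using \<rho> by (simp add: divide_le_cancel)
qed

lemma continuous_on_imp_usc_on:
  fixes g :: "'a::topological_space \<Rightarrow> real"
  assumes "continuous_on S g"
  shows "usc_on S g"
  unfolding usc_on_def
proof (intro ballI allI impI)
  fix x c assume "x \<in> S" "g x < c"
  then show "\<forall>\<^sub>F y in at x within S. g y < c"
    using assms order_tendstoD(2) unfolding continuous_on_def by blast
qed

lemma Ck_on_2_laplacian_nonneg_imp_subharmonic_on:
  fixes u :: "'a::euclidean_space \<Rightarrow> real"
  assumes S: "open S" and u: "Ck_on 2 S u" and lap: "\<And>x. x \<in> S \<Longrightarrow> real_laplacian u x \<ge> 0"
  shows "subharmonic_on S u"
  unfolding subharmonic_on_def
proof (intro conjI ballI)
  show "usc_on S u" by (rule continuous_on_imp_usc_on[OF Ck_on_imp_continuous_on[OF u]])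
  fix a assume "a \<in> S"
  then obtain e where e: "e > 0" "ball a e \<subseteq> S" using S open_contains_ball by blast
  have "cball a (2 * (e / 4)) \<subseteq> ball a e" using e by (auto simp: mem_cball mem_ball)
  with e have sub: "cball a (2 * (e / 4)) \<subseteq> S" by blast
  show "\<exists>r0>0. \<forall>r. 0 < r \<and> r < r0 \<longrightarrow> cball a r \<subseteq> S \<and> u integrable_on cball a r \<and>
      u a \<le> integral (cball a r) u / measure lebesgue (cball a r)"
  proof (intro exI[of _ "e / 4"] conjI allI impI)
    fix r assume r: "0 < r \<and> r < e / 4"
    then have "cball a r \<subseteq> cball a (2 * (e / 4))" by (intro subset_cball) auto
    with sub show cb: "cball a r \<subseteq> S" by blast
    show "u integrable_on cball a r"
      using Ck_on_imp_continuous_on[OF u] cb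
      by (intro integrable_continuous_cball) (rule continuous_on_subset)
    show "u a \<le> integral (cball a r) u / measure lebesgue (cball a r)"
      using sub_mean_value_cball[OF S u lap sub] r measure_cball_pos[of r a]
      by (simp add: pos_le_divide_eq)
  qed (use e in simp)
qed

section \<open>Powers of subharmonic functions\<close>

lemma powr_ge_tangent:
  fixes p A t :: real
  assumes p: "p \<ge> 1" and A: "A > 0" and t: "t \<ge> 0"
  shows "A powr p + p * A powr (p - 1) * (t - A) \<le> t powr p"
proof (cases "t = 0")
  case True
  have "A powr (p - 1) * A = A powr p" using A by (simp add: powr_diff)
  then have "A powr p + p * A powr (p - 1) * (t - A) = (1 - p) * A powr p"
    using True by (simp add: algebra_simps)
  also have "\<dots> \<le> 0" using p by (simp add: mult_nonpos_nonneg)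
  finally show ?thesis using True by simp
next
  case False
  have "p * A powr (p - 1) * (t - A) \<le> t powr p - A powr p"
  proof (rule convex_on_imp_above_tangent[OF powr_convex[OF p]])
    show "connected {0::real<..}" by simp
    show "A \<in> interior {0<..}" using A by (simp add: interior_open)
    show "t \<in> {0<..}" using False t by simp
    show "((\<lambda>x. x powr p) has_real_derivative p * A powr (p - 1)) (at A within {0<..})"
      using has_real_derivative_powr[OF A] by (rule has_field_derivative_at_within)
  qed
  then show ?thesis by simp
qed

lemma jensen_powr_integral:
  fixes u :: "'a::euclidean_space \<Rightarrow> real"
  assumes K: "K \<in> lmeasurable" "measure lebesgue K > 0"
    and u: "u integrable_on K" "(\<lambda>x. u x powr p) integrable_on K" "\<And>x. x \<in> K \<Longrightarrow> u x \<ge> 0"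
    and p: "p \<ge> 1"
  shows "(integral K u / measure lebesgue K) powr p \<le> integral K (\<lambda>x. u x powr p) / measure lebesgue K"
proof -
  define m where "m = measure lebesgue K"
  define A where "A = integral K u / m"
  have m: "m > 0" using K(2) by (simp add: m_def)
  have "A \<ge> 0" unfolding A_def using integral_nonneg[OF u(1,3)] m by simp
  have up: "integral K (\<lambda>x. u x powr p) \<ge> 0" by (rule integral_nonneg[OF u(2)]) simp
  show ?thesis
  proof (cases "A = 0")
    case True
    then show ?thesis unfolding m_def[symmetric] A_def[symmetric] using up m by simp
  next
    case False
    with \<open>A \<ge> 0\<close> have A: "A > 0" by simp
    define c where "c = p * A powr (p - 1)"
    have one: "((\<lambda>x. 1) has_integral m) K"
      unfolding m_def lmeasure_integral[OF K(1)] by (rule integrable_integral[OF integrable_on_const[OF K(1)]])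
    have "((\<lambda>x. A powr p * 1 + c * (u x - A * 1)) has_integral A powr p * m + c * (integral K u - A * m)) K"
      by (intro has_integral_add has_integral_mult_right has_integral_diff one integrable_integral u(1))
    moreover have "A * m = integral K u" using m by (simp add: A_def)
    ultimately have "((\<lambda>x. A powr p * 1 + c * (u x - A * 1)) has_integral A powr p * m) K" by simp
    then have "A powr p * m \<le> integral K (\<lambda>x. u x powr p)"
      by (rule has_integral_le[OF _ integrable_integral[OF u(2)]])
        (use powr_ge_tangent[OF p A] u(3) in \<open>simp add: c_def\<close>)
    then show ?thesis using m by (simp add: A_def m_def pos_le_divide_eq)
  qed
qed

lemma subharmonic_on_powr:
  fixes u :: "'a::euclidean_space \<Rightarrow> real"
  assumes sub: "subharmonic_on S u" and cont: "continuous_on S u"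
    and nonneg: "\<And>x. x \<in> S \<Longrightarrow> u x \<ge> 0" and p: "p \<ge> 1"
  shows "subharmonic_on S (\<lambda>x. u x powr p)"
  unfolding subharmonic_on_def
proof (intro conjI ballI)
  have cont_p: "continuous_on S (\<lambda>x. u x powr p)"
    using cont nonneg p by (intro continuous_on_powr' continuous_on_const) auto
  then show "usc_on S (\<lambda>x. u x powr p)" by (rule continuous_on_imp_usc_on)
  fix a assume "a \<in> S"
  with sub obtain r0 where r0: "r0 > 0" "\<And>r. 0 < r \<Longrightarrow> r < r0 \<Longrightarrow> cball a r \<subseteq> S \<and>
      u integrable_on cball a r \<and> u a \<le> integral (cball a r) u / measure lebesgue (cball a r)"
    unfolding subharmonic_on_def by blast
  show "\<exists>r0>0. \<forall>r. 0 < r \<and> r < r0 \<longrightarrow> cball a r \<subseteq> S \<and> (\<lambda>x. u x powr p) integrable_on cball a r \<and>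
      u a powr p \<le> integral (cball a r) (\<lambda>x. u x powr p) / measure lebesgue (cball a r)"
  proof (intro exI[of _ r0] conjI allI impI)
    fix r assume r: "0 < r \<and> r < r0"
    then have cb: "cball a r \<subseteq> S" and ua: "u integrable_on cball a r"
      and mean: "u a \<le> integral (cball a r) u / measure lebesgue (cball a r)"
      using r0(2) by blast+
    show "cball a r \<subseteq> S" by (rule cb)
    show int_p: "(\<lambda>x. u x powr p) integrable_on cball a r"
      by (rule integrable_continuous_cball[OF continuous_on_subset[OF cont_p cb]])
    have "u a powr p \<le> (integral (cball a r) u / measure lebesgue (cball a r)) powr p"
      using mean nonneg[of a] \<open>a \<in> S\<close> p by (intro powr_mono2) auto
    also have "\<dots> \<le> integral (cball a r) (\<lambda>x. u x powr p) / measure lebesgue (cball a r)"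
      using cb nonneg r p
      by (intro jensen_powr_integral[OF lmeasurable_cball measure_cball_pos ua int_p]) auto
    finally show "u a powr p \<le> integral (cball a r) (\<lambda>x. u x powr p) / measure lebesgue (cball a r)" .
  qed (use r0 in simp)
qed

lemma powr_power2_half:
  fixes x \<alpha> :: real
  assumes "x \<ge> 0"
  shows "(x\<^sup>2) powr (\<alpha> / 2) = x powr \<alpha>"
proof (cases "x = 0")
  case False
  with assms have "x powr (real 2) = x ^ 2" by (intro powr_realpow) simp
  then have "x\<^sup>2 = x powr 2" by simp
  then have "(x\<^sup>2) powr (\<alpha> / 2) = x powr (2 * (\<alpha> / 2))" by (simp add: powr_powr)
  then show ?thesis by simp
qed simp

theorem lemma2p3:
  fixes f :: "complex^'n::finite \<Rightarrow> complex"
  assumes "Ck_on 3 (ball 0 1) f"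
    and "\<forall>z\<in>ball 0 1. Re (\<Sum>k\<in>UNIV.
            cnj (wz k f z) * wz k (laplacian f) z + cnj (wzbar k f z) * wzbar k (laplacian f) z) \<ge> 0"
  shows "\<forall>\<alpha>::real. \<alpha> \<ge> 2 \<longrightarrow> subharmonic_on (ball 0 1) (\<lambda>z. normD f z powr \<alpha>)"
proof (intro allI impI)
  fix \<alpha> :: real assume \<alpha>: "\<alpha> \<ge> 2"
  let ?u = "\<lambda>z. (normD f z)\<^sup>2"
  have u: "Ck_on 2 (ball 0 1) ?u" using Ck_on_normD_power2[OF open_ball assms(1)] .
  have "real_laplacian ?u z \<ge> 0" if "z \<in> ball 0 1" for z
    using real_laplacian_normD_power2[OF open_ball assms(1) that] assms(2) that
    by (simp add: sum_nonneg)
  then have "subharmonic_on (ball 0 1) ?u"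
    by (rule Ck_on_2_laplacian_nonneg_imp_subharmonic_on[OF open_ball u])
  then have "subharmonic_on (ball 0 1) (\<lambda>z. ?u z powr (\<alpha> / 2))"
    using Ck_on_imp_continuous_on[OF u] \<alpha> by (intro subharmonic_on_powr) auto
  moreover have "?u z powr (\<alpha> / 2) = normD f z powr \<alpha>" for z
    by (rule powr_power2_half) (simp add: normD_def sum_nonneg)
  ultimately show "subharmonic_on (ball 0 1) (\<lambda>z. normD f z powr \<alpha>)" by simp
qed

end
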